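(* Purifying extensions are insufficient for the infimum in squashed entanglement: there exist finite-dimensional bipartite densities $\rho^{AB}$ for which the infimum of $I(A:B|C)_{\tilde\rho}$ over only pure extensions (pure states $\tilde\rho^{ABC}$ with $\operatorname{tr}_C\tilde\rho^{ABC}=\rho^{AB}$) is strictly larger than $E_{sq}(A:B)_\rho$. (Equivalently, the same holds for $I_{sq}(\mathcal{A}:\mathcal{B})_\rho$ with $\mathcal{A}=\mathbb{B}(\mathcal{H}_A)\otimes 1$, $\mathcal{B}=1\otimes\mathbb{B}(\mathcal{H}_B)$, which coincides with $E_{sq}(A:B)_\rho$.)
   Context: $I(A:B|C)_\rho = H(AC)_\rho+H(BC)_\rho-H(C)_\rho-H(ABC)_\rho$ with $H(X)_\rho$ the von Neumann entropy of the reduced density on $X$. Squashed entanglement: $E_{sq}(A:B)_\rho=\inf\{ I(A:B|C)_{\tilde\rho} : \tilde\rho^{ABC},\ \tilde\rho^{AB}=\rho^{AB}\}$, the infimum over all finite-dimensional extensions. *)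

theory Defs
  imports "Jordan_Normal_Form.Schur_Decomposition" "HOL-Computational_Algebra.Polynomial"
begin

definition mtrace :: "complex mat \<Rightarrow> complex" where
  "mtrace A = (\<Sum>i<dim_row A. A $$ (i,i))"

definition density :: "nat \<Rightarrow> complex mat \<Rightarrow> bool" where
  "density n \<rho> \<longleftrightarrow> \<rho> \<in> carrier_mat n n \<and> mat_adjoint \<rho> = \<rho> \<and>
     (\<forall>v \<in> carrier_vec n. 0 \<le> Re ((\<rho> *\<^sub>v v) \<bullet>c v)) \<and> mtrace \<rho> = 1"

definition pure_state :: "nat \<Rightarrow> complex mat \<Rightarrow> bool" where
  "pure_state n \<rho> \<longleftrightarrow> density n \<rho> \<and>
     (\<exists>\<psi> \<in> carrier_vec n. \<rho> = mat n n (\<lambda>(i,j). \<psi> $ i * cnj (\<psi> $ j)))"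

text \<open>Von Neumann entropy -tr(rho ln rho) = - sum over eigenvalues (with multiplicity,
  i.e. roots of the characteristic polynomial) of lambda ln lambda, with 0 ln 0 = 0.\<close>
definition entropy :: "complex mat \<Rightarrow> real" where
  "entropy \<rho> = - sum_mset (image_mset
       (\<lambda>x. if Re x = 0 then 0 else Re x * ln (Re x)) (proots (char_poly \<rho>)))"

text \<open>Tripartite system H_A (dim a) (x) H_B (dim b) (x) H_C (dim c);
  basis vector |i>|j>|k> has index (i*b + j)*c + k.\<close>
definition idx3 :: "nat \<Rightarrow> nat \<Rightarrow> nat \<Rightarrow> nat \<Rightarrow> nat \<Rightarrow> nat" where
  "idx3 b c i j k = (i * b + j) * c + k"

definition red_AB :: "nat \<Rightarrow> nat \<Rightarrow> nat \<Rightarrow> complex mat \<Rightarrow> complex mat" where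
  "red_AB a b c \<rho> = mat (a*b) (a*b) (\<lambda>(r,s).
     \<Sum>k<c. \<rho> $$ (idx3 b c (r div b) (r mod b) k, idx3 b c (s div b) (s mod b) k))"

definition red_AC :: "nat \<Rightarrow> nat \<Rightarrow> nat \<Rightarrow> complex mat \<Rightarrow> complex mat" where
  "red_AC a b c \<rho> = mat (a*c) (a*c) (\<lambda>(r,s).
     \<Sum>j<b. \<rho> $$ (idx3 b c (r div c) j (r mod c), idx3 b c (s div c) j (s mod c)))"

definition red_BC :: "nat \<Rightarrow> nat \<Rightarrow> nat \<Rightarrow> complex mat \<Rightarrow> complex mat" where
  "red_BC a b c \<rho> = mat (b*c) (b*c) (\<lambda>(r,s).
     \<Sum>i<a. \<rho> $$ (idx3 b c i (r div c) (r mod c), idx3 b c i (s div c) (s mod c)))"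

definition red_C :: "nat \<Rightarrow> nat \<Rightarrow> nat \<Rightarrow> complex mat \<Rightarrow> complex mat" where
  "red_C a b c \<rho> = mat c c (\<lambda>(r,s).
     \<Sum>i<a. \<Sum>j<b. \<rho> $$ (idx3 b c i j r, idx3 b c i j s))"

definition cmi :: "nat \<Rightarrow> nat \<Rightarrow> nat \<Rightarrow> complex mat \<Rightarrow> real" where
  "cmi a b c \<rho> = entropy (red_AC a b c \<rho>) + entropy (red_BC a b c \<rho>)
                 - entropy (red_C a b c \<rho>) - entropy \<rho>"

definition squashed_ent :: "nat \<Rightarrow> nat \<Rightarrow> complex mat \<Rightarrow> real" where
  "squashed_ent a b \<rho> = Inf {cmi a b c \<sigma> | c \<sigma>. c > 0 \<and> density (a*b*c) \<sigma> \<and> red_AB a b c \<sigma> = \<rho>}"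

definition squashed_ent_pure :: "nat \<Rightarrow> nat \<Rightarrow> complex mat \<Rightarrow> real" where
  "squashed_ent_pure a b \<rho> = Inf {cmi a b c \<sigma> | c \<sigma>. c > 0 \<and> pure_state (a*b*c) \<sigma> \<and> red_AB a b c \<sigma> = \<rho>}"

end

theory Submission
  imports Defs "HOL-Computational_Algebra.Fundamental_Theorem_Algebra"
begin

(* The witness is rho = (|00><00| + |11><11|)/2. Copying the classical bit into C gives an
   extension with I(A:B|C) = 0, so E_sq(rho) <= 0. A pure extension has the form
   (|00>|c0> + |11>|c1>)/sqrt 2 with orthonormal c0, c1; hence H(ABC) = 0, H(C) <= ln 2, and the
   AC and BC marginals each contain two orthogonal vectors of weight 1/2, so H(AC), H(BC) >= ln 2
   and I(A:B|C) >= ln 2. All entropy estimates rest on a spectral theorem for Hermitian matrices: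
   if M = sum_l |psi_l><psi_l|, then H(M) <= sum_l eta(|psi_l|^2) with eta x = -x ln x, the
   reverse inequality holds for orthogonal psi_l, and tracing out a d-dimensional factor lowers
   the right-hand side by at most ln d. *)

section \<open>Finite-dimensional inner products\<close>

definition inner_on :: "'r set \<Rightarrow> ('r \<Rightarrow> complex) \<Rightarrow> ('r \<Rightarrow> complex) \<Rightarrow> complex" where
  "inner_on R x y = (\<Sum>r\<in>R. x r * cnj (y r))"

definition sqnorm_on :: "'r set \<Rightarrow> ('r \<Rightarrow> complex) \<Rightarrow> real" where
  "sqnorm_on R x = (\<Sum>r\<in>R. (cmod (x r))\<^sup>2)"

definition orthonormal_on :: "'r set \<Rightarrow> 'i set \<Rightarrow> ('i \<Rightarrow> 'r \<Rightarrow> complex) \<Rightarrow> bool" where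
  "orthonormal_on R I u \<longleftrightarrow> (\<forall>j\<in>I. \<forall>k\<in>I. inner_on R (u j) (u k) = (if j = k then 1 else 0))"

abbreviation vinner :: "nat \<Rightarrow> (nat \<Rightarrow> complex) \<Rightarrow> (nat \<Rightarrow> complex) \<Rightarrow> complex" where
  "vinner n \<equiv> inner_on {..<n}"

abbreviation vsqnorm :: "nat \<Rightarrow> (nat \<Rightarrow> complex) \<Rightarrow> real" where
  "vsqnorm n \<equiv> sqnorm_on {..<n}"

abbreviation onb :: "nat \<Rightarrow> (nat \<Rightarrow> nat \<Rightarrow> complex) \<Rightarrow> bool" where
  "onb n \<equiv> orthonormal_on {..<n} {..<n}"

lemma of_real_cmod_sq: "complex_of_real ((cmod z)\<^sup>2) = z * cnj z"
  by (metis complex_norm_square)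

lemma of_real_sum_cmod_sq: "complex_of_real (\<Sum>k\<in>A. (cmod (f k))\<^sup>2) = (\<Sum>k\<in>A. f k * cnj (f k))"
  unfolding of_real_sum by (intro sum.cong refl) (rule of_real_cmod_sq)

lemma of_real_sqnorm_on: "complex_of_real (sqnorm_on R x) = inner_on R x x"
  unfolding sqnorm_on_def inner_on_def by (rule of_real_sum_cmod_sq)

lemma sqnorm_on_nonneg: "sqnorm_on R x \<ge> 0"
  unfolding sqnorm_on_def by (simp add: sum_nonneg)

lemma sqnorm_on_eq_0D: "finite R \<Longrightarrow> sqnorm_on R x = 0 \<Longrightarrow> r \<in> R \<Longrightarrow> x r = 0"
  unfolding sqnorm_on_def by (subst (asm) sum_nonneg_eq_0_iff) auto

lemma cnj_inner_on: "cnj (inner_on R x y) = inner_on R y x"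
  unfolding inner_on_def cnj_sum by (simp add: mult.commute)

lemma inner_on_sum_orthonormal:
  assumes "orthonormal_on R I w" and "finite I"
  shows "inner_on R (\<lambda>r. \<Sum>i\<in>I. a i * w i r) (\<lambda>r. \<Sum>k\<in>I. b k * w k r) = (\<Sum>i\<in>I. a i * cnj (b i))"
proof -
  have "inner_on R (\<lambda>r. \<Sum>i\<in>I. a i * w i r) (\<lambda>r. \<Sum>k\<in>I. b k * w k r)
      = (\<Sum>r\<in>R. \<Sum>i\<in>I. \<Sum>k\<in>I. a i * cnj (b k) * (w i r * cnj (w k r)))"
    unfolding inner_on_def cnj_sum sum_product by (intro sum.cong refl) (simp add: mult_ac)
  also have "\<dots> = (\<Sum>i\<in>I. \<Sum>k\<in>I. a i * cnj (b k) * inner_on R (w i) (w k))"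
    unfolding inner_on_def sum_distrib_left by (subst sum.swap, rule sum.cong[OF refl], rule sum.swap)
  also have "\<dots> = (\<Sum>i\<in>I. \<Sum>k\<in>I. if i = k then a i * cnj (b k) else 0)"
    using assms(1) unfolding orthonormal_on_def by (intro sum.cong refl) auto
  also have "\<dots> = (\<Sum>i\<in>I. a i * cnj (b i))"
    using assms(2) by (simp add: sum.delta)
  finally show ?thesis .
qed

lemma bessel_inequality:
  assumes o: "orthonormal_on R I u" and fin: "finite I"
  shows "(\<Sum>k\<in>I. (cmod (inner_on R x (u k)))\<^sup>2) \<le> sqnorm_on R x"
proof -
  define c where "c k = inner_on R x (u k)" for k
  define v where "v r = (\<Sum>k\<in>I. c k * u k r)" for r
  define S where "S = (\<Sum>k\<in>I. c k * cnj (c k))"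
  have vv: "inner_on R v v = S" unfolding v_def S_def by (rule inner_on_sum_orthonormal[OF o fin])
  have xv: "inner_on R x v = S"
  proof -
    have "inner_on R x v = (\<Sum>r\<in>R. \<Sum>k\<in>I. cnj (c k) * (x r * cnj (u k r)))"
      unfolding inner_on_def v_def cnj_sum sum_distrib_left by (intro sum.cong refl) (simp add: mult_ac)
    also have "\<dots> = (\<Sum>k\<in>I. cnj (c k) * c k)"
      unfolding c_def inner_on_def sum_distrib_left by (rule sum.swap)
    finally show ?thesis unfolding S_def by (simp add: mult.commute)
  qed
  have vx: "inner_on R v x = S"
    using xv cnj_inner_on[of R x v] unfolding S_def cnj_sum by (simp add: mult.commute)
  have "inner_on R (\<lambda>r. x r - v r) (\<lambda>r. x r - v r) = inner_on R x x - S"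
    using vv xv vx unfolding inner_on_def by (simp add: algebra_simps sum_subtractf sum.distrib)
  moreover have "S = complex_of_real (\<Sum>k\<in>I. (cmod (inner_on R x (u k)))\<^sup>2)"
    unfolding S_def c_def by (rule of_real_sum_cmod_sq[symmetric])
  ultimately have "sqnorm_on R (\<lambda>r. x r - v r) = sqnorm_on R x - (\<Sum>k\<in>I. (cmod (inner_on R x (u k)))\<^sup>2)"
    unfolding of_real_sqnorm_on[symmetric] by (metis of_real_diff of_real_eq_iff)
  thus ?thesis using sqnorm_on_nonneg[of R "\<lambda>r. x r - v r"] by simp
qed

lemma onb_completeness:
  assumes o: "onb n u" and r: "r < n" and s: "s < n"
  shows "(\<Sum>j<n. u j r * cnj (u j s)) = (if r = s then 1 else 0)"
proof -
  define U where "U = mat n n (\<lambda>(r,j). u j r)"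
  define V where "V = mat n n (\<lambda>(j,s). cnj (u j s))"
  have U: "U \<in> carrier_mat n n" and V: "V \<in> carrier_mat n n" unfolding U_def V_def by auto
  have "V * U = 1\<^sub>m n"
  proof (rule eq_matI)
    fix j k assume j: "j < dim_row (1\<^sub>m n)" and k: "k < dim_col (1\<^sub>m n)"
    have "(V * U) $$ (j,k) = vinner n (u k) (u j)"
      using j k unfolding U_def V_def inner_on_def by (simp add: scalar_prod_def atLeast0LessThan mult.commute)
    also have "\<dots> = 1\<^sub>m n $$ (j,k)" using o j k unfolding orthonormal_on_def by auto
    finally show "(V * U) $$ (j,k) = 1\<^sub>m n $$ (j,k)" .
  qed (auto simp: U_def V_def)
  hence "U * V = 1\<^sub>m n" using mat_mult_left_right_inverse[OF V U] by simp
  moreover have "(U * V) $$ (r,s) = (\<Sum>j<n. u j r * cnj (u j s))"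
    using r s unfolding U_def V_def by (simp add: scalar_prod_def atLeast0LessThan)
  ultimately show ?thesis using r s by simp
qed

lemma parseval_onb:
  assumes o: "onb N u"
  shows "(\<Sum>k<N. (cmod (vinner N x (u k)))\<^sup>2) = vsqnorm N x"
proof -
  have "complex_of_real (\<Sum>k<N. (cmod (vinner N x (u k)))\<^sup>2)
      = (\<Sum>k<N. \<Sum>r<N. \<Sum>s<N. x r * cnj (x s) * (u k s * cnj (u k r)))"
    unfolding of_real_sum_cmod_sq inner_on_def cnj_sum sum_product by (intro sum.cong refl) (simp add: mult_ac)
  also have "\<dots> = (\<Sum>r<N. \<Sum>s<N. x r * cnj (x s) * (\<Sum>k<N. u k s * cnj (u k r)))"
    unfolding sum_distrib_left by (subst sum.swap, rule sum.cong[OF refl], rule sum.swap)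
  also have "\<dots> = (\<Sum>r<N. \<Sum>s<N. x r * cnj (x s) * (if s = r then 1 else 0))"
    using onb_completeness[OF o] by (intro sum.cong refl) simp
  also have "\<dots> = (\<Sum>r<N. x r * cnj (x r))"
    by (intro sum.cong refl) (simp add: if_distrib sum.delta cong: if_cong)
  also have "\<dots> = complex_of_real (vsqnorm N x)" unfolding of_real_sqnorm_on inner_on_def ..
  finally show ?thesis by (simp only: of_real_eq_iff)
qed

lemma inner_on_divide:
  "inner_on R (\<lambda>r. x r / of_real a) (\<lambda>r. y r / of_real b) = inner_on R x y / of_real (a * b)"
  unfolding inner_on_def sum_divide_distrib by (intro sum.cong refl) simp

lemma inner_on_normalized:
  assumes "sqnorm_on R x \<noteq> 0"
  defines "v \<equiv> \<lambda>r. x r / of_real (sqrt (sqnorm_on R x))"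
  shows "inner_on R v v = 1"
proof -
  have "inner_on R v v = of_real (sqnorm_on R x) / of_real (sqrt (sqnorm_on R x) * sqrt (sqnorm_on R x))"
    unfolding v_def inner_on_divide of_real_sqnorm_on ..
  thus ?thesis using assms(1) sqnorm_on_nonneg[of R x] by simp
qed

section \<open>Spectral theorem for Hermitian matrices\<close>

definition hermitian_on :: "nat \<Rightarrow> (nat \<Rightarrow> nat \<Rightarrow> complex) \<Rightarrow> bool" where
  "hermitian_on n M \<longleftrightarrow> (\<forall>i<n. \<forall>j<n. M i j = cnj (M j i))"

definition spectral_decomp ::
    "nat \<Rightarrow> (nat \<Rightarrow> nat \<Rightarrow> complex) \<Rightarrow> (nat \<Rightarrow> nat \<Rightarrow> complex) \<Rightarrow> (nat \<Rightarrow> real) \<Rightarrow> bool" where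
  "spectral_decomp n M u lam \<longleftrightarrow> onb n u \<and>
     (\<forall>r<n. \<forall>s<n. M r s = (\<Sum>k<n. of_real (lam k) * u k r * cnj (u k s)))"

lemma hermitian_onD: "hermitian_on n M \<Longrightarrow> i < n \<Longrightarrow> j < n \<Longrightarrow> cnj (M i j) = M j i"
  unfolding hermitian_on_def by (metis complex_cnj_cnj)

lemma hermitian_eigenvalue_real:
  assumes H: "hermitian_on n M" and v: "vinner n v v = 1"
    and Mv: "\<And>r. r < n \<Longrightarrow> (\<Sum>s<n. M r s * v s) = z * v r"
  shows "cnj z = z"
proof -
  have z: "z = (\<Sum>r<n. \<Sum>s<n. M r s * v s * cnj (v r))"
  proof -
    have "z = z * vinner n v v" using v by simp
    also have "\<dots> = (\<Sum>r<n. (\<Sum>s<n. M r s * v s) * cnj (v r))"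
      unfolding inner_on_def sum_distrib_left using Mv by (intro sum.cong refl) (simp add: mult.assoc)
    finally show ?thesis by (simp add: sum_distrib_right)
  qed
  have "cnj z = (\<Sum>r<n. \<Sum>s<n. cnj (M r s) * cnj (v s) * v r)"
    by (subst z) (simp add: cnj_sum)
  also have "\<dots> = (\<Sum>r<n. \<Sum>s<n. M s r * cnj (v s) * v r)"
    using hermitian_onD[OF H] by (intro sum.cong refl) simp
  also have "\<dots> = z" by (subst sum.swap, subst z) (intro sum.cong refl, simp add: mult_ac)
  finally show ?thesis .
qed

lemma hermitian_unit_eigenvector:
  assumes n: "n > 0" and H: "hermitian_on n M"
  shows "\<exists>v (e::real). vinner n v v = 1 \<and> (\<forall>r<n. (\<Sum>s<n. M r s * v s) = of_real e * v r)"
proof -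
  define A where "A = mat n n (\<lambda>(r,s). M r s)"
  have A: "A \<in> carrier_mat n n" unfolding A_def by simp
  have "degree (char_poly A) = n" using degree_monic_char_poly[OF A] by simp
  hence "\<not> constant (poly (char_poly A))" using n constant_degree[of "char_poly A"] by simp
  then obtain z where "poly (char_poly A) z = 0" using fundamental_theorem_of_algebra by blast
  hence "eigenvalue A z" using eigenvalue_root_char_poly[OF A] by simp
  from find_eigenvector[OF A this] obtain x where "eigenvector A x z" by blast
  hence x: "x \<in> carrier_vec n" and x0: "x \<noteq> 0\<^sub>v n" and Ax: "A *\<^sub>v x = z \<cdot>\<^sub>v x"
    unfolding eigenvector_def using A by auto
  define v where "v r = x $ r / of_real (sqrt (vsqnorm n (\<lambda>r. x $ r)))" for r
  have "vsqnorm n (\<lambda>r. x $ r) \<noteq> 0"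
  proof
    assume "vsqnorm n (\<lambda>r. x $ r) = 0"
    hence "x = 0\<^sub>v n" using x sqnorm_on_eq_0D[of "{..<n}"] by (intro eq_vecI) auto
    thus False using x0 by simp
  qed
  hence v1: "vinner n v v = 1" unfolding v_def by (rule inner_on_normalized)
  have Mv: "(\<Sum>s<n. M r s * v s) = z * v r" if r: "r < n" for r
  proof -
    have "(\<Sum>s<n. M r s * x $ s) = z * x $ r"
      using arg_cong[OF Ax, of "\<lambda>y. y $ r"] A x r unfolding A_def
      by (simp add: scalar_prod_def atLeast0LessThan)
    thus ?thesis unfolding v_def by (simp add: sum_divide_distrib[symmetric])
  qed
  have "z = of_real (Re z)"
    using hermitian_eigenvalue_real[OF H v1 Mv] by (metis Reals_cnj_iff complex_is_Real_iff of_real_Re)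
  thus ?thesis using v1 Mv by (intro exI[of _ v] exI[of _ "Re z"]) auto
qed

lemma corthogonal_basis_with_head:
  fixes v :: "complex vec"
  assumes v: "v \<in> carrier_vec n" and v0: "v \<noteq> 0\<^sub>v n"
  shows "\<exists>ws. set ws \<subseteq> carrier_vec n \<and> corthogonal ws \<and> length ws = n \<and> hd ws = v"
proof -
  interpret cof_vec_space n "TYPE(complex)" .
  define b where "b = basis_completion v"
  from basis_completion[OF v v0, folded b_def]
  have dist_b: "distinct b" and indep: "\<not> lin_dep (set b)" and b: "set b \<subseteq> carrier_vec n"
    and hdb: "hd b = v" and len_b: "length b = n" by auto
  have "n \<noteq> 0" using v v0 by (auto simp: vec_eq_iff)
  with hdb len_b obtain vs where bv: "b = v # vs" by (cases b) auto
  show ?thesis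
    using gram_schmidt_result[OF b dist_b indep refl] gram_schmidt_hd[OF v, of vs, folded bv] len_b
    by (intro exI[of _ "gram_schmidt n b"]) auto
qed

lemma onb_extend_unit_vector:
  assumes n: "n > 0" and v1: "vinner n v v = 1"
  shows "\<exists>w. onb n w \<and> (\<forall>r<n. w 0 r = v r)"
proof -
  define vv where "vv = vec n v"
  have vv: "vv \<in> carrier_vec n" unfolding vv_def by simp
  have "vv \<noteq> 0\<^sub>v n"
  proof
    assume "vv = 0\<^sub>v n"
    hence "\<forall>r<n. v r = 0" unfolding vv_def by (metis index_vec index_zero_vec(1))
    thus False using v1 unfolding inner_on_def by simp
  qed
  from corthogonal_basis_with_head[OF vv this] obtain ws where ws: "set ws \<subseteq> carrier_vec n"
    "corthogonal ws" "length ws = n" "hd ws = vv" by blast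
  define x where "x j r = ws ! j $ r" for j r
  define w where "w j r = x j r / of_real (sqrt (vsqnorm n (x j)))" for j r
  have ipx: "vinner n (x j) (x k) = ws ! j \<bullet>c ws ! k" if "j < n" "k < n" for j k
  proof -
    have "dim_vec (ws ! j) = n" "dim_vec (ws ! k) = n"
      using ws(1,3) that nth_mem by (metis carrier_vecD subset_code(1))+
    thus ?thesis unfolding inner_on_def x_def scalar_prod_def by (simp add: atLeast0LessThan)
  qed
  have orth: "vinner n (x j) (x k) = 0 \<longleftrightarrow> j \<noteq> k" if "j < n" "k < n" for j k
    using corthogonalD[OF ws(2)] that ws(3) ipx[OF that] by auto
  have nz: "vsqnorm n (x j) \<noteq> 0" if "j < n" for j
    using orth[OF that that] of_real_sqnorm_on[of "{..<n}" "x j"] by auto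
  have "onb n w" unfolding orthonormal_on_def
  proof (intro ballI)
    fix j k assume j: "j \<in> {..<n}" and k: "k \<in> {..<n}"
    show "vinner n (w j) (w k) = (if j = k then 1 else 0)"
    proof (cases "j = k")
      case True thus ?thesis using inner_on_normalized[OF nz] k unfolding w_def by simp
    next
      case False thus ?thesis using orth j k unfolding w_def inner_on_divide by simp
    qed
  qed
  moreover have "w 0 r = v r" if "r < n" for r
  proof -
    have ws0: "ws ! 0 = vv" using ws n by (metis hd_conv_nth list.size(3) not_less0 less_nat_zero_code)
    hence "vinner n (x 0) (x 0) = vinner n v v" unfolding x_def vv_def inner_on_def by simp
    hence "vsqnorm n (x 0) = 1" using v1 of_real_sqnorm_on[of "{..<n}" "x 0"] by simp
    thus ?thesis unfolding w_def x_def ws0 vv_def using that by simp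
  qed
  ultimately show ?thesis by blast
qed

lemma sum_product_scaled:
  fixes c :: "'a::comm_ring_1"
  shows "c * (\<Sum>i\<in>I. f i) * (\<Sum>j\<in>J. g j) = (\<Sum>i\<in>I. \<Sum>j\<in>J. c * f i * g j)"
  by (subst mult.assoc, subst sum_product) (simp add: sum_distrib_left mult.assoc)

lemma sum_swap3:
  "(\<Sum>i\<in>I. \<Sum>j\<in>J. \<Sum>a\<in>K. F i j a) = (\<Sum>a\<in>K. \<Sum>i\<in>I. \<Sum>j\<in>J. F i j a)"
  by (subst sum.swap) (rule sum.cong[OF refl], rule sum.swap)

lemma sum_swap4:
  "(\<Sum>i\<in>I. \<Sum>j\<in>J. \<Sum>a\<in>K. \<Sum>b\<in>L. F i j a b) = (\<Sum>a\<in>K. \<Sum>b\<in>L. \<Sum>i\<in>I. \<Sum>j\<in>J. F i j a b)"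
proof -
  have "(\<Sum>i\<in>I. \<Sum>j\<in>J. \<Sum>a\<in>K. \<Sum>b\<in>L. F i j a b) = (\<Sum>a\<in>K. \<Sum>i\<in>I. \<Sum>j\<in>J. \<Sum>b\<in>L. F i j a b)"
    by (rule sum_swap3)
  also have "\<dots> = (\<Sum>a\<in>K. \<Sum>b\<in>L. \<Sum>i\<in>I. \<Sum>j\<in>J. F i j a b)"
    by (rule sum.cong[OF refl], rule sum_swap3)
  finally show ?thesis .
qed

lemma onb_coordinates_inverse:
  assumes o: "onb n w" and r: "r < n" and s: "s < n"
  shows "(\<Sum>i<n. \<Sum>j<n. w i r * cnj (w j s) * (\<Sum>a<n. \<Sum>b<n. cnj (w i a) * M a b * w j b)) = M r s"
proof -
  have "(\<Sum>i<n. \<Sum>j<n. w i r * cnj (w j s) * (\<Sum>a<n. \<Sum>b<n. cnj (w i a) * M a b * w j b))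
     = (\<Sum>i<n. \<Sum>j<n. \<Sum>a<n. \<Sum>b<n. M a b * (w i r * cnj (w i a)) * (w j b * cnj (w j s)))"
    unfolding sum_distrib_left by (intro sum.cong refl) (simp add: mult_ac)
  also have "\<dots> = (\<Sum>a<n. \<Sum>b<n. M a b * (\<Sum>i<n. w i r * cnj (w i a)) * (\<Sum>j<n. w j b * cnj (w j s)))"
    by (subst sum_swap4) (simp only: sum_product_scaled)
  also have "\<dots> = (\<Sum>a<n. \<Sum>b<n. if a = r then (if b = s then M a b else 0) else 0)"
    using onb_completeness[OF o] r s by (intro sum.cong refl) auto
  also have "\<dots> = (\<Sum>a<n. if a = r then M a s else 0)"
    using s by (intro sum.cong refl) (auto simp: sum.delta)
  also have "\<dots> = M r s" using r by (simp add: sum.delta)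
  finally show ?thesis .
qed

lemma spectral_decomp_change_basis:
  assumes o: "onb n w"
    and d: "spectral_decomp n (\<lambda>i j. \<Sum>a<n. \<Sum>b<n. cnj (w i a) * M a b * w j b) c lam"
  shows "spectral_decomp n M (\<lambda>k r. \<Sum>i<n. c k i * w i r) lam"
  unfolding spectral_decomp_def
proof (intro conjI allI impI)
  have oc: "onb n c" and dc: "\<And>i j. i < n \<Longrightarrow> j < n \<Longrightarrow>
      (\<Sum>a<n. \<Sum>b<n. cnj (w i a) * M a b * w j b) = (\<Sum>k<n. of_real (lam k) * c k i * cnj (c k j))"
    using d unfolding spectral_decomp_def by auto
  show "onb n (\<lambda>k r. \<Sum>i<n. c k i * w i r)"
    using oc unfolding orthonormal_on_def inner_on_sum_orthonormal[OF o finite_lessThan]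
    by (simp add: inner_on_def)
  fix r s assume r: "r < n" and s: "s < n"
  have "M r s = (\<Sum>i<n. \<Sum>j<n. w i r * cnj (w j s) * (\<Sum>a<n. \<Sum>b<n. cnj (w i a) * M a b * w j b))"
    using onb_coordinates_inverse[OF o r s] by simp
  also have "\<dots> = (\<Sum>i<n. \<Sum>j<n. \<Sum>k<n. of_real (lam k) * (c k i * w i r) * cnj (c k j * w j s))"
    using dc by (intro sum.cong refl) (simp add: sum_distrib_left mult_ac)
  also have "\<dots> = (\<Sum>k<n. of_real (lam k) * (\<Sum>i<n. c k i * w i r) * cnj (\<Sum>j<n. c k j * w j s))"
    by (subst sum_swap3) (simp only: cnj_sum sum_product_scaled)
  finally show "M r s = (\<Sum>k<n. of_real (lam k) * (\<Sum>i<n. c k i * w i r) * cnj (\<Sum>j<n. c k j * w j s))" .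
qed

lemma spectral_decomp_Suc:
  assumes H: "hermitian_on (Suc m) B"
    and B0: "\<And>i. i < Suc m \<Longrightarrow> B i 0 = (if i = 0 then of_real e else 0)"
    and d: "spectral_decomp m (\<lambda>i j. B (Suc i) (Suc j)) u lam"
  shows "spectral_decomp (Suc m) B
     (\<lambda>k i. if k = 0 then (if i = 0 then 1 else 0) else if i = 0 then 0 else u (k - 1) (i - 1))
     (\<lambda>k. if k = 0 then e else lam (k - 1))"
    (is "spectral_decomp _ _ ?c ?lam")
  unfolding spectral_decomp_def
proof (intro conjI allI impI)
  have o: "onb m u" and du: "\<And>i j. i < m \<Longrightarrow> j < m \<Longrightarrow>
      B (Suc i) (Suc j) = (\<Sum>k<m. of_real (lam k) * u k i * cnj (u k j))"
    using d unfolding spectral_decomp_def by auto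
  show "onb (Suc m) ?c" unfolding orthonormal_on_def
  proof (intro ballI)
    fix j k assume "j \<in> {..<Suc m}" "k \<in> {..<Suc m}"
    moreover have "vinner (Suc m) (?c j) (?c k) = ?c j 0 * cnj (?c k 0) + vinner m (\<lambda>i. ?c j (Suc i)) (\<lambda>i. ?c k (Suc i))"
      unfolding inner_on_def by (rule sum.lessThan_Suc_shift)
    ultimately show "vinner (Suc m) (?c j) (?c k) = (if j = k then 1 else 0)"
      using o unfolding orthonormal_on_def inner_on_def
      by (cases j; cases k) auto
  qed
  fix i j assume i: "i < Suc m" and j: "j < Suc m"
  have B0': "B 0 j = (if j = 0 then of_real e else 0)"
    using hermitian_onD[OF H j, of 0] B0[OF j] by auto
  have "(\<Sum>k<Suc m. of_real (?lam k) * ?c k i * cnj (?c k j))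
      = of_real e * ?c 0 i * cnj (?c 0 j) + (\<Sum>k<m. of_real (lam k) * ?c (Suc k) i * cnj (?c (Suc k) j))"
    by (subst sum.lessThan_Suc_shift) simp
  also have "\<dots> = B i j"
  proof (cases "i = 0 \<or> j = 0")
    case True thus ?thesis using B0[OF i] B0' by auto
  next
    case False
    then obtain i' j' where "i = Suc i'" "j = Suc j'" by (metis not0_implies_Suc)
    thus ?thesis using du i j by simp
  qed
  finally show "B i j = (\<Sum>k<Suc m. of_real (?lam k) * ?c k i * cnj (?c k j))" by simp
qed

theorem hermitian_spectral_decomp:
  "hermitian_on n M \<Longrightarrow> \<exists>u lam. spectral_decomp n M u lam"
proof (induction n arbitrary: M)
  case 0
  show ?case unfolding spectral_decomp_def orthonormal_on_def by auto
next
  case (Suc m)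
  obtain v e where v1: "vinner (Suc m) v v = 1"
    and Mv: "\<And>r. r < Suc m \<Longrightarrow> (\<Sum>s<Suc m. M r s * v s) = of_real e * v r"
    using hermitian_unit_eigenvector[OF _ Suc.prems] by auto
  obtain w where o: "onb (Suc m) w" and w0: "\<And>r. r < Suc m \<Longrightarrow> w 0 r = v r"
    using onb_extend_unit_vector[OF _ v1] by auto
  define B where "B i j = (\<Sum>a<Suc m. \<Sum>b<Suc m. cnj (w i a) * M a b * w j b)" for i j
  have HB: "hermitian_on (Suc m) B" unfolding hermitian_on_def
  proof (intro allI impI)
    fix i j assume "i < Suc m" "j < Suc m"
    have "cnj (B j i) = (\<Sum>a<Suc m. \<Sum>b<Suc m. w j a * M b a * cnj (w i b))"
      unfolding B_def cnj_sum using hermitian_onD[OF Suc.prems] by (intro sum.cong refl) simp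
    also have "\<dots> = B i j" unfolding B_def by (subst sum.swap) (intro sum.cong refl, simp add: mult_ac)
    finally show "B i j = cnj (B j i)" by simp
  qed
  have B0: "B i 0 = (if i = 0 then of_real e else 0)" if "i < Suc m" for i
  proof -
    have "B i 0 = (\<Sum>a<Suc m. cnj (w i a) * (\<Sum>b<Suc m. M a b * v b))"
      unfolding B_def sum_distrib_left using w0 by (intro sum.cong refl) (simp add: mult.assoc)
    also have "\<dots> = (\<Sum>a<Suc m. of_real e * (w 0 a * cnj (w i a)))"
      by (intro sum.cong refl) (simp add: Mv w0 del: sum.lessThan_Suc)
    also have "\<dots> = of_real e * vinner (Suc m) (w 0) (w i)"
      unfolding inner_on_def sum_distrib_left ..
    finally show ?thesis using o that unfolding orthonormal_on_def by auto
  qed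
  have "hermitian_on m (\<lambda>i j. B (Suc i) (Suc j))"
    unfolding hermitian_on_def using hermitian_onD[OF HB] by (metis Suc_mono complex_cnj_cnj)
  then obtain u lam where "spectral_decomp m (\<lambda>i j. B (Suc i) (Suc j)) u lam" using Suc.IH by blast
  from spectral_decomp_Suc[OF HB B0 this] spectral_decomp_change_basis[OF o]
  show ?case unfolding B_def by blast
qed

section \<open>The function eta and the entropy of a spectral decomposition\<close>

definition eta :: "real \<Rightarrow> real" where
  "eta x = (if x = 0 then 0 else - (x * ln x))"

lemma eta_0 [simp]: "eta 0 = 0"
  unfolding eta_def by simp

lemma eta_half: "eta (1/2) = ln 2 / 2"
  unfolding eta_def by (simp add: ln_div)

lemma proots_prod_linear_factors: "proots (\<Prod>a\<leftarrow>xs. [:- a, 1:]) = mset (xs :: complex list)"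
proof (induction xs)
  case (Cons x xs)
  have "proots (\<Prod>a\<leftarrow>x # xs. [:- a, 1:]) = proots ([:- x, 1:] * (\<Prod>a\<leftarrow>xs. [:- a, 1:]))"
    by simp
  also have "\<dots> = proots [:- x, 1:] + proots (\<Prod>a\<leftarrow>xs. [:- a, 1:])"
    by (rule proots_mult) (auto simp: prod_list_zero_iff)
  finally show ?case using Cons proots_linear_factor[of "-x"] by simp
qed simp

lemma entropy_spectral_decomp:
  assumes A: "A \<in> carrier_mat n n" and d: "spectral_decomp n (\<lambda>r s. A $$ (r,s)) u lam"
  shows "entropy A = (\<Sum>k<n. eta (lam k))"
proof -
  have o: "onb n u" and dA: "\<And>r s. r < n \<Longrightarrow> s < n \<Longrightarrow> A $$ (r,s) = (\<Sum>k<n. of_real (lam k) * u k r * cnj (u k s))"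
    using d unfolding spectral_decomp_def by auto
  define U where "U = mat n n (\<lambda>(r,k). u k r)"
  define V where "V = mat n n (\<lambda>(k,s). cnj (u k s))"
  define D where "D = mat n n (\<lambda>(j,k). if j = k then complex_of_real (lam k) else 0)"
  have U: "U \<in> carrier_mat n n" and V: "V \<in> carrier_mat n n" and D: "D \<in> carrier_mat n n"
    unfolding U_def V_def D_def by auto
  have UV: "U * V = 1\<^sub>m n"
    by (rule eq_matI) (use onb_completeness[OF o] in \<open>auto simp: U_def V_def scalar_prod_def atLeast0LessThan\<close>)
  hence VU: "V * U = 1\<^sub>m n" using mat_mult_left_right_inverse[OF U V] by simp
  have UD: "(U * D) $$ (r,k) = u k r * of_real (lam k)" if "r < n" "k < n" for r k
  proof -
    have "(U * D) $$ (r,k) = (\<Sum>j<n. u j r * (if j = k then complex_of_real (lam k) else 0))"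
      using that unfolding U_def D_def by (simp add: scalar_prod_def atLeast0LessThan)
    also have "\<dots> = (\<Sum>j<n. if j = k then u k r * complex_of_real (lam k) else 0)"
      by (intro sum.cong refl) auto
    finally show ?thesis using that by simp
  qed
  have "A = U * D * V"
  proof (rule eq_matI)
    fix r s assume "r < dim_row (U * D * V)" "s < dim_col (U * D * V)"
    hence r: "r < n" and s: "s < n" using U V by auto
    have "(U * D * V) $$ (r,s) = (\<Sum>k<n. (U * D) $$ (r,k) * cnj (u k s))"
      using r s U D unfolding V_def by (simp add: scalar_prod_def atLeast0LessThan)
    also have "\<dots> = A $$ (r,s)" using UD r dA s by (simp add: mult_ac)
    finally show "A $$ (r,s) = (U * D * V) $$ (r,s)" by simp
  qed (use A U V in auto)
  hence "similar_mat A D" unfolding similar_mat_def similar_mat_wit_def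
    using A U V D UV VU by (intro exI[of _ U] exI[of _ V]) auto
  hence "char_poly A = char_poly D" by (rule char_poly_similar)
  also have "\<dots> = (\<Prod>a\<leftarrow>diag_mat D. [:- a, 1:])"
    by (rule char_poly_upper_triangular[OF D]) (auto simp: upper_triangular_def D_def)
  finally have "proots (char_poly A) = mset (diag_mat D)" using proots_prod_linear_factors by simp
  also have "diag_mat D = map (\<lambda>k. complex_of_real (lam k)) [0..<n]"
    unfolding diag_mat_def D_def by auto
  finally have pr: "proots (char_poly A) = mset (map (\<lambda>k. complex_of_real (lam k)) [0..<n])" .
  have "entropy A = - (\<Sum>k\<in>{0..<n}. (\<lambda>x. if Re x = 0 then 0 else Re x * ln (Re x)) (complex_of_real (lam k)))"
    unfolding entropy_def pr sum_unfold_sum_mset by (simp add: image_mset.compositionality o_def)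
  also have "\<dots> = (\<Sum>k<n. eta (lam k))"
    unfolding eta_def sum_negf[symmetric] atLeast0LessThan by (intro sum.cong refl) simp
  finally show ?thesis .
qed

lemma eta_le_tangent:
  assumes x: "x \<ge> 0" and m: "m > 0"
  shows "eta x \<le> - x * ln m + m - x"
proof (cases "x = 0")
  case True thus ?thesis using m by simp
next
  case False
  hence x0: "x > 0" using x by simp
  have "ln (m / x) \<le> m / x - 1" using m x0 by (intro ln_le_minus_one) simp
  hence "x * (ln m - ln x) \<le> x * (m / x - 1)" using m x0 by (intro mult_left_mono) (auto simp: ln_div)
  thus ?thesis using False x0 unfolding eta_def by (simp add: algebra_simps)
qed

lemma eta_mult:
  assumes "P > 0" and "w \<ge> 0"
  shows "eta (P * w) = w * eta P + P * eta w"
  using assms unfolding eta_def by (cases "w = 0") (auto simp: ln_mult algebra_simps)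

lemma sum_weighted_eta_le:
  assumes fin: "finite K" and w: "\<And>k. k \<in> K \<Longrightarrow> w k \<ge> 0" and x: "\<And>k. k \<in> K \<Longrightarrow> x k \<ge> 0"
    and ws: "(\<Sum>k\<in>K. w k) \<le> 1"
  shows "(\<Sum>k\<in>K. w k * eta (x k)) \<le> eta (\<Sum>k\<in>K. w k * x k)"
proof -
  define m where "m = (\<Sum>k\<in>K. w k * x k)"
  have m0: "m \<ge> 0" unfolding m_def using w x by (intro sum_nonneg) simp
  show ?thesis
  proof (cases "m = 0")
    case True
    hence "\<forall>k\<in>K. w k * x k = 0" using fin w x unfolding m_def
      by (subst (asm) sum_nonneg_eq_0_iff) auto
    hence "\<forall>k\<in>K. w k * eta (x k) = 0" by (metis eta_0 mult_eq_0_iff)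
    thus ?thesis using True unfolding m_def by simp
  next
    case False
    hence mp: "m > 0" using m0 by simp
    have "(\<Sum>k\<in>K. w k * eta (x k)) \<le> (\<Sum>k\<in>K. w k * (- x k * ln m + m - x k))"
      using eta_le_tangent[OF x mp] w by (intro sum_mono mult_left_mono) auto
    also have "\<dots> = (\<Sum>k\<in>K. (w k * x k) * (- ln m) + m * w k - w k * x k)"
      by (intro sum.cong refl) (simp add: algebra_simps)
    also have "\<dots> = - m * ln m + m * (\<Sum>k\<in>K. w k) - m"
      unfolding m_def by (simp add: sum.distrib sum_subtractf sum_distrib_left sum_distrib_right)
    also have "\<dots> \<le> eta m" using ws m0 False unfolding eta_def by (simp add: mult_left_le)
    finally show ?thesis unfolding m_def .
  qed
qed

lemma sum_eta_stochastic_image_ge: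
  assumes finJ: "finite J" and finK: "finite K"
    and S: "\<And>k j. k \<in> K \<Longrightarrow> j \<in> J \<Longrightarrow> S k j \<ge> 0"
    and mu: "\<And>k. k \<in> K \<Longrightarrow> mu k \<ge> 0"
    and col: "\<And>j. j \<in> J \<Longrightarrow> (\<Sum>k\<in>K. S k j) \<le> c"
    and row: "\<And>k. k \<in> K \<Longrightarrow> (\<Sum>j\<in>J. S k j) = 1"
    and c: "c > 0"
    and nu: "\<And>j. j \<in> J \<Longrightarrow> nu j = (\<Sum>k\<in>K. S k j * mu k)"
  shows "(\<Sum>k\<in>K. eta (mu k)) - ln c * (\<Sum>j\<in>J. nu j) \<le> (\<Sum>j\<in>J. eta (nu j))"
proof -
  have column_jensen: "(\<Sum>k\<in>K. S k j * eta (mu k)) - nu j * ln c \<le> eta (nu j)" if j: "j \<in> J" for j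
  proof -
    define y where "y = (\<Sum>k\<in>K. (S k j / c) * mu k)"
    have y0: "y \<ge> 0" unfolding y_def using S[OF _ j] mu c by (intro sum_nonneg) simp
    have nuy: "nu j = c * y" unfolding y_def nu[OF j] sum_distrib_left using c by (intro sum.cong refl) simp
    have "(\<Sum>k\<in>K. (S k j / c) * eta (mu k)) \<le> eta y"
      unfolding y_def using S[OF _ j] mu c col[OF j]
      by (intro sum_weighted_eta_le finK) (auto simp: sum_divide_distrib[symmetric])
    hence "c * (\<Sum>k\<in>K. (S k j / c) * eta (mu k)) \<le> c * eta y" using c by simp
    moreover have "c * (\<Sum>k\<in>K. (S k j / c) * eta (mu k)) = (\<Sum>k\<in>K. S k j * eta (mu k))"
      unfolding sum_distrib_left using c by (intro sum.cong refl) simp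
    moreover have "eta (nu j) = c * eta y - nu j * ln c"
      using c unfolding nuy eta_mult[OF c y0] by (simp add: eta_def algebra_simps)
    ultimately show ?thesis by linarith
  qed
  have "(\<Sum>k\<in>K. eta (mu k)) = (\<Sum>k\<in>K. (\<Sum>j\<in>J. S k j) * eta (mu k))" using row by simp
  also have "\<dots> = (\<Sum>j\<in>J. \<Sum>k\<in>K. S k j * eta (mu k))"
    unfolding sum_distrib_right by (rule sum.swap)
  finally have "(\<Sum>k\<in>K. eta (mu k)) = (\<Sum>j\<in>J. \<Sum>k\<in>K. S k j * eta (mu k))" .
  moreover have "(\<Sum>j\<in>J. (\<Sum>k\<in>K. S k j * eta (mu k)) - nu j * ln c) \<le> (\<Sum>j\<in>J. eta (nu j))"
    using column_jensen by (rule sum_mono)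
  ultimately show ?thesis unfolding sum_subtractf sum_distrib_right[symmetric] by (simp add: mult.commute)
qed

lemma sum_eta_le_ln_card:
  assumes fin: "finite I" and Ine: "I \<noteq> {}" and w: "\<And>t. t \<in> I \<Longrightarrow> w t \<ge> 0" and ws: "(\<Sum>t\<in>I. w t) = 1"
  shows "(\<Sum>t\<in>I. eta (w t)) \<le> ln (real (card I))"
proof -
  define n where "n = real (card I)"
  have n: "n > 0" unfolding n_def using fin Ine by (simp add: card_gt_0_iff)
  have "(\<Sum>t\<in>I. eta (w t)) \<le> (\<Sum>t\<in>I. - w t * ln (1/n) + 1/n - w t)"
    using eta_le_tangent[OF w] n by (intro sum_mono) auto
  also have "\<dots> = (\<Sum>t\<in>I. w t) * ln n + card I * (1/n) - (\<Sum>t\<in>I. w t)"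
    using n by (simp add: sum_subtractf sum.distrib sum_distrib_right ln_div)
  also have "\<dots> = ln n" using ws n unfolding n_def by simp
  finally show ?thesis unfolding n_def .
qed

lemma sum_eta_le_eta_sum:
  assumes fin: "finite I" and Ine: "I \<noteq> {}" and q: "\<And>t. t \<in> I \<Longrightarrow> q t \<ge> 0"
  shows "(\<Sum>t\<in>I. eta (q t)) \<le> eta (\<Sum>t\<in>I. q t) + (\<Sum>t\<in>I. q t) * ln (real (card I))"
proof -
  define P where "P = (\<Sum>t\<in>I. q t)"
  have P0: "P \<ge> 0" unfolding P_def using q by (simp add: sum_nonneg)
  show ?thesis
  proof (cases "P = 0")
    case True
    hence "\<forall>t\<in>I. q t = 0" using fin q unfolding P_def by (subst (asm) sum_nonneg_eq_0_iff) auto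
    thus ?thesis by simp
  next
    case False
    hence Pp: "P > 0" using P0 by simp
    define w where "w t = q t / P" for t
    have w0: "w t \<ge> 0" if "t \<in> I" for t unfolding w_def using q[OF that] Pp by simp
    have ws: "(\<Sum>t\<in>I. w t) = 1" unfolding w_def sum_divide_distrib[symmetric] P_def[symmetric] using Pp by simp
    have "(\<Sum>t\<in>I. eta (q t)) = (\<Sum>t\<in>I. w t * eta P + P * eta (w t))"
      using eta_mult[OF Pp w0] Pp unfolding w_def by (intro sum.cong refl) simp
    also have "\<dots> = eta P + P * (\<Sum>t\<in>I. eta (w t))"
      using ws by (simp add: sum.distrib sum_distrib_left sum_distrib_right[symmetric])
    also have "\<dots> \<le> eta P + P * ln (real (card I))"
      using sum_eta_le_ln_card[OF fin Ine w0 ws] Pp by simp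
    finally show ?thesis unfolding P_def .
  qed
qed

section \<open>Entropy bounds from ensemble decompositions\<close>

definition ensemble_decomp :: "nat \<Rightarrow> 'l set \<Rightarrow> ('l \<Rightarrow> nat \<Rightarrow> complex) \<Rightarrow> complex mat \<Rightarrow> bool" where
  "ensemble_decomp N L psi M \<longleftrightarrow> M \<in> carrier_mat N N \<and> finite L \<and>
     (\<forall>r<N. \<forall>s<N. M $$ (r,s) = (\<Sum>l\<in>L. psi l r * cnj (psi l s)))"

lemma ensemble_decomp_hermitian:
  "ensemble_decomp N L psi M \<Longrightarrow> hermitian_on N (\<lambda>r s. M $$ (r,s))"
  unfolding ensemble_decomp_def hermitian_on_def by (auto simp: cnj_sum mult.commute)

lemma spectral_decomp_diagonalizes:
  assumes "spectral_decomp N M u lam" and k: "k < N" and k': "k' < N"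
  shows "(\<Sum>r<N. \<Sum>s<N. cnj (u k r) * M r s * u k' s) = (if k = k' then of_real (lam k) else 0)"
proof -
  have o: "onb N u" and d: "\<forall>r<N. \<forall>s<N. M r s = (\<Sum>j<N. of_real (lam j) * u j r * cnj (u j s))"
    using assms(1) unfolding spectral_decomp_def by auto
  have "(\<Sum>r<N. \<Sum>s<N. cnj (u k r) * M r s * u k' s)
      = (\<Sum>r<N. \<Sum>s<N. \<Sum>j<N. of_real (lam j) * (u j r * cnj (u k r)) * (u k' s * cnj (u j s)))"
    using d by (intro sum.cong refl) (simp add: sum_distrib_left sum_distrib_right mult_ac)
  also have "\<dots> = (\<Sum>j<N. \<Sum>r<N. \<Sum>s<N. of_real (lam j) * (u j r * cnj (u k r)) * (u k' s * cnj (u j s)))"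
    by (rule sum_swap3)
  also have "\<dots> = (\<Sum>j<N. of_real (lam j) * vinner N (u j) (u k) * vinner N (u k') (u j))"
    unfolding inner_on_def by (intro sum.cong refl) (simp only: sum_product_scaled)
  also have "\<dots> = (\<Sum>j<N. if j = k then (if k = k' then of_real (lam k) else 0) else 0)"
    using o k k' unfolding orthonormal_on_def by (intro sum.cong refl) auto
  also have "\<dots> = (if k = k' then of_real (lam k) else 0)" using k by (simp add: sum.delta)
  finally show ?thesis .
qed

lemma ensemble_decomp_sesquilinear:
  assumes e: "ensemble_decomp N L psi M" and k: "k < N" and k': "k' < N"
  shows "(\<Sum>r<N. \<Sum>s<N. cnj (u k r) * M $$ (r,s) * u k' s) =
         (\<Sum>l\<in>L. vinner N (psi l) (u k) * cnj (vinner N (psi l) (u k')))"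
proof -
  have "(\<Sum>r<N. \<Sum>s<N. cnj (u k r) * M $$ (r,s) * u k' s)
      = (\<Sum>r<N. \<Sum>s<N. \<Sum>l\<in>L. (psi l r * cnj (u k r)) * (u k' s * cnj (psi l s)))"
    using e unfolding ensemble_decomp_def by (intro sum.cong refl) (simp add: sum_distrib_left sum_distrib_right mult_ac)
  also have "\<dots> = (\<Sum>l\<in>L. \<Sum>r<N. \<Sum>s<N. (psi l r * cnj (u k r)) * (u k' s * cnj (psi l s)))"
    by (rule sum_swap3)
  also have "\<dots> = (\<Sum>l\<in>L. vinner N (psi l) (u k) * vinner N (u k') (psi l))"
    unfolding inner_on_def by (intro sum.cong refl) (simp only: sum_product_scaled[where c=1, simplified])
  also have "\<dots> = (\<Sum>l\<in>L. vinner N (psi l) (u k) * cnj (vinner N (psi l) (u k')))"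
    by (simp add: cnj_inner_on)
  finally show ?thesis .
qed

lemma ensemble_decomp_spectral:
  assumes e: "ensemble_decomp N L psi M"
  shows "\<exists>u lam. onb N u \<and> entropy M = (\<Sum>k<N. eta (lam k)) \<and>
     (\<forall>k<N. \<forall>k'<N. (\<Sum>l\<in>L. vinner N (psi l) (u k) * cnj (vinner N (psi l) (u k'))) = (if k = k' then of_real (lam k) else 0)) \<and>
     (\<forall>k<N. lam k = (\<Sum>l\<in>L. (cmod (vinner N (psi l) (u k)))\<^sup>2))"
proof -
  have M: "M \<in> carrier_mat N N" using e unfolding ensemble_decomp_def by simp
  obtain u lam where d: "spectral_decomp N (\<lambda>r s. M $$ (r,s)) u lam"
    using hermitian_spectral_decomp[OF ensemble_decomp_hermitian[OF e]] by blast
  have ent: "entropy M = (\<Sum>k<N. eta (lam k))" by (rule entropy_spectral_decomp[OF M d])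
  have G: "(\<Sum>l\<in>L. vinner N (psi l) (u k) * cnj (vinner N (psi l) (u k'))) = (if k = k' then of_real (lam k) else 0)"
    if "k < N" "k' < N" for k k'
    using ensemble_decomp_sesquilinear[OF e that, of u] spectral_decomp_diagonalizes[OF d that] by simp
  have "lam k = (\<Sum>l\<in>L. (cmod (vinner N (psi l) (u k)))\<^sup>2)" if k: "k < N" for k
  proof -
    have "complex_of_real (lam k) = complex_of_real (\<Sum>l\<in>L. (cmod (vinner N (psi l) (u k)))\<^sup>2)"
      unfolding of_real_sum_cmod_sq using G[OF k k] by simp
    thus ?thesis by (simp only: of_real_eq_iff)
  qed
  thus ?thesis using d ent G unfolding spectral_decomp_def by blast
qed


lemma orthonormal_on_coordinate_bound:
  assumes o: "orthonormal_on L K x" and finK: "finite K" and finL: "finite L" and l: "l \<in> L"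
  shows "(\<Sum>k\<in>K. (cmod (x k l))\<^sup>2) \<le> 1"
proof -
  define e where "e l' = (if l' = l then (1::complex) else 0)" for l'
  have "inner_on L e (x k) = cnj (x k l)" for k
  proof -
    have "inner_on L e (x k) = (\<Sum>r\<in>L. if r = l then cnj (x k r) else 0)"
      unfolding inner_on_def e_def by (intro sum.cong refl) auto
    thus ?thesis using finL l by simp
  qed
  moreover have "sqnorm_on L e = 1"
  proof -
    have "sqnorm_on L e = (\<Sum>r\<in>L. if r = l then 1 else 0)"
      unfolding sqnorm_on_def e_def by (intro sum.cong refl) auto
    thus ?thesis using finL l by simp
  qed
  ultimately show ?thesis using bessel_inequality[OF o finK, of e] by simp
qed

lemma sum_sq_overlaps_div_le_1:
  assumes G: "\<And>k k'. k \<in> K \<Longrightarrow> k' \<in> K \<Longrightarrow>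
      (\<Sum>l\<in>L. a l k * cnj (a l k')) = (if k = k' then of_real (lam k) else 0)"
    and pos: "\<And>k. k \<in> K \<Longrightarrow> lam k > 0" and finK: "finite K" and finL: "finite L" and l: "l \<in> L"
  shows "(\<Sum>k\<in>K. (cmod (a l k))\<^sup>2 / lam k) \<le> 1"
proof -
  define x where "x k l' = a l' k / of_real (sqrt (lam k))" for k l'
  have "orthonormal_on L K x" unfolding orthonormal_on_def
  proof (intro ballI)
    fix k k' assume k: "k \<in> K" and k': "k' \<in> K"
    have "inner_on L (x k) (x k') = (\<Sum>l\<in>L. a l k * cnj (a l k')) / of_real (sqrt (lam k) * sqrt (lam k'))"
      unfolding x_def inner_on_divide by (simp add: inner_on_def)
    thus "inner_on L (x k) (x k') = (if k = k' then 1 else 0)" unfolding G[OF k k'] using pos[OF k] pos[OF k']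
      by (simp add: of_real_mult[symmetric] del: of_real_mult)
  qed
  from orthonormal_on_coordinate_bound[OF this finK finL l]
  have "(\<Sum>k\<in>K. (cmod (a l k))\<^sup>2 / (sqrt (lam k))\<^sup>2) \<le> 1" unfolding x_def by (simp add: norm_divide power_divide)
  moreover have "(\<Sum>k\<in>K. (cmod (a l k))\<^sup>2 / (sqrt (lam k))\<^sup>2) = (\<Sum>k\<in>K. (cmod (a l k))\<^sup>2 / lam k)"
    using pos by (intro sum.cong refl) (simp add: less_imp_le)
  ultimately show ?thesis by simp
qed

lemma entropy_le_ensemble:
  assumes e: "ensemble_decomp N L psi M"
  shows "entropy M \<le> (\<Sum>l\<in>L. eta (vsqnorm N (psi l)))"
proof -
  obtain u lam where o: "onb N u" and ent: "entropy M = (\<Sum>k<N. eta (lam k))"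
    and G: "\<And>k k'. k < N \<Longrightarrow> k' < N \<Longrightarrow>
      (\<Sum>l\<in>L. vinner N (psi l) (u k) * cnj (vinner N (psi l) (u k'))) = (if k = k' then of_real (lam k) else 0)"
    and lam: "\<And>k. k < N \<Longrightarrow> lam k = (\<Sum>l\<in>L. (cmod (vinner N (psi l) (u k)))\<^sup>2)"
    using ensemble_decomp_spectral[OF e] by blast
  have finL: "finite L" using e unfolding ensemble_decomp_def by simp
  have lam0: "lam k \<ge> 0" if "k < N" for k using lam[OF that] by (simp add: sum_nonneg)
  define K where "K = {k. k < N \<and> lam k > 0}"
  have finK: "finite K" unfolding K_def by simp
  define S where "S k l = (cmod (vinner N (psi l) (u k)))\<^sup>2 / lam k" for k l
  have zero_out: "vinner N (psi l) (u k) = 0" if "k < N" "k \<notin> K" "l \<in> L" for k l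
  proof -
    have "(\<Sum>l\<in>L. (cmod (vinner N (psi l) (u k)))\<^sup>2) = 0"
      using lam0[OF that(1)] lam[OF that(1)] that(1,2) unfolding K_def by auto
    thus ?thesis using finL that(3) by (subst (asm) sum_nonneg_eq_0_iff) auto
  qed
  have "(\<Sum>k<N. eta (lam k)) = (\<Sum>k\<in>K. eta (lam k))"
    by (rule sum.mono_neutral_right) (use lam0 in \<open>force simp: K_def\<close>)+
  moreover have "(\<Sum>k\<in>K. eta (lam k)) - ln 1 * (\<Sum>l\<in>L. vsqnorm N (psi l)) \<le> (\<Sum>l\<in>L. eta (vsqnorm N (psi l)))"
  proof (rule sum_eta_stochastic_image_ge[OF finL finK, where S=S])
    show "S k l \<ge> 0" if "k \<in> K" "l \<in> L" for k l unfolding S_def using that lam0 K_def by auto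
    show "lam k \<ge> 0" if "k \<in> K" for k using that lam0 K_def by auto
    show "(\<Sum>l\<in>L. S k l) = 1" if k: "k \<in> K" for k
      using k lam[of k] unfolding S_def K_def by (simp add: sum_divide_distrib[symmetric])
    show "(1::real) > 0" by simp
    show "vsqnorm N (psi l) = (\<Sum>k\<in>K. S k l * lam k)" if l: "l \<in> L" for l
    proof -
      have "vsqnorm N (psi l) = (\<Sum>k<N. (cmod (vinner N (psi l) (u k)))\<^sup>2)" by (rule parseval_onb[OF o, symmetric])
      also have "\<dots> = (\<Sum>k\<in>K. (cmod (vinner N (psi l) (u k)))\<^sup>2)"
        by (rule sum.mono_neutral_right) (use zero_out l in \<open>auto simp: K_def\<close>)
      also have "\<dots> = (\<Sum>k\<in>K. S k l * lam k)" unfolding S_def K_def by (intro sum.cong refl) auto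
      finally show ?thesis .
    qed
    show "(\<Sum>k\<in>K. S k l) \<le> 1" if "l \<in> L" for l
      unfolding S_def by (rule sum_sq_overlaps_div_le_1[OF _ _ finK finL that]) (use G in \<open>auto simp: K_def\<close>)
  qed
  ultimately show ?thesis using ent by simp
qed

lemma inner_on_reindex:
  "bij_betw h S T \<Longrightarrow> inner_on S (\<lambda>s. f (h s)) (\<lambda>s. g (h s)) = inner_on T f g"
  unfolding inner_on_def by (rule sum.reindex_bij_betw)

lemma sqnorm_on_reindex: "bij_betw h S T \<Longrightarrow> sqnorm_on S (\<lambda>s. f (h s)) = sqnorm_on T f"
  unfolding sqnorm_on_def by (rule sum.reindex_bij_betw)

lemma orthonormal_on_normalize:
  assumes orth: "\<And>l l'. l \<in> K \<Longrightarrow> l' \<in> K \<Longrightarrow> l \<noteq> l' \<Longrightarrow> inner_on R (psi l) (psi l') = 0"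
    and nz: "\<And>l. l \<in> K \<Longrightarrow> sqnorm_on R (psi l) \<noteq> 0"
  shows "orthonormal_on R K (\<lambda>l r. psi l r / of_real (sqrt (sqnorm_on R (psi l))))"
  unfolding orthonormal_on_def
proof (intro ballI)
  fix l l' assume "l \<in> K" "l' \<in> K"
  thus "inner_on R (\<lambda>r. psi l r / of_real (sqrt (sqnorm_on R (psi l))))
          (\<lambda>r. psi l' r / of_real (sqrt (sqnorm_on R (psi l')))) = (if l = l' then 1 else 0)"
    using inner_on_normalized[OF nz] orth unfolding inner_on_divide by (cases "l = l'") auto
qed

lemma bessel_inequality_slice:
  assumes o: "orthonormal_on (I \<times> R) K x" and finK: "finite K" and finI: "finite I" and i: "i \<in> I"
  shows "(\<Sum>l\<in>K. (cmod (inner_on R v (\<lambda>r. x l (i,r))))\<^sup>2) \<le> sqnorm_on R v"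
proof -
  define w where "w = (\<lambda>(i',r). if i' = i then v r else 0)"
  have "inner_on (I \<times> R) w (x l) = inner_on R v (\<lambda>r. x l (i,r))" for l
  proof -
    have "inner_on (I \<times> R) w (x l) = (\<Sum>i'\<in>I. if i' = i then inner_on R v (\<lambda>r. x l (i,r)) else 0)"
      unfolding inner_on_def w_def sum.cartesian_product' by (intro sum.cong refl) auto
    thus ?thesis using finI i by simp
  qed
  moreover have "sqnorm_on (I \<times> R) w = sqnorm_on R v"
  proof -
    have "sqnorm_on (I \<times> R) w = (\<Sum>i'\<in>I. if i' = i then sqnorm_on R v else 0)"
      unfolding sqnorm_on_def w_def sum.cartesian_product' by (intro sum.cong refl) auto
    thus ?thesis using finI i by simp
  qed
  ultimately show ?thesis using bessel_inequality[OF o finK, of w] by simp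
qed

lemma ensemble_decomp_partial_trace:
  assumes e: "ensemble_decomp N L psi S"
    and b: "bij_betw (\<lambda>(i,r). phi i r) (I \<times> {..<M}) {..<N}" and finI: "finite I"
    and R: "R \<in> carrier_mat M M"
    and Rd: "\<And>r s. r < M \<Longrightarrow> s < M \<Longrightarrow> R $$ (r,s) = (\<Sum>i\<in>I. S $$ (phi i r, phi i s))"
  shows "ensemble_decomp M (L \<times> I) (\<lambda>(l,i) r. psi l (phi i r)) R"
  unfolding ensemble_decomp_def
proof (intro conjI allI impI)
  show "R \<in> carrier_mat M M" by fact
  show "finite (L \<times> I)" using e finI unfolding ensemble_decomp_def by simp
  fix r s assume r: "r < M" and s: "s < M"
  have "phi i r < N" "phi i s < N" if "i \<in> I" for i
    using b r s that unfolding bij_betw_def by auto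
  hence "R $$ (r,s) = (\<Sum>i\<in>I. \<Sum>l\<in>L. psi l (phi i r) * cnj (psi l (phi i s)))"
    unfolding Rd[OF r s] using e unfolding ensemble_decomp_def by (intro sum.cong refl) auto
  also have "\<dots> = (\<Sum>l\<in>L. \<Sum>i\<in>I. psi l (phi i r) * cnj (psi l (phi i s)))" by (rule sum.swap)
  finally show "R $$ (r,s) = (\<Sum>x\<in>L \<times> I. (case x of (l,i) \<Rightarrow> \<lambda>r. psi l (phi i r)) r *
                                      cnj ((case x of (l,i) \<Rightarrow> \<lambda>r. psi l (phi i r)) s))"
    unfolding sum.cartesian_product' by simp
qed

lemma ensemble_decomp_drop_zeros:
  assumes e: "ensemble_decomp N L psi M"
  shows "ensemble_decomp N {l \<in> L. vsqnorm N (psi l) \<noteq> 0} psi M"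
  unfolding ensemble_decomp_def
proof (intro conjI allI impI)
  show "M \<in> carrier_mat N N" "finite {l \<in> L. vsqnorm N (psi l) \<noteq> 0}"
    using e unfolding ensemble_decomp_def by auto
  fix r s assume "r < N" "s < N"
  moreover have "psi l r = 0" if "vsqnorm N (psi l) = 0" "r < N" for l r
    using sqnorm_on_eq_0D[OF _ that(1)] that(2) by simp
  ultimately show "M $$ (r,s) = (\<Sum>l\<in>{l \<in> L. vsqnorm N (psi l) \<noteq> 0}. psi l r * cnj (psi l s))"
    using e unfolding ensemble_decomp_def by (auto intro!: sum.mono_neutral_right)
qed

lemma sum_normalized_overlaps_le_card:
  assumes orth: "\<And>l l'. l \<in> L \<Longrightarrow> l' \<in> L \<Longrightarrow> l \<noteq> l' \<Longrightarrow> vinner N (psi l) (psi l') = 0"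
    and nz: "\<And>l. l \<in> L \<Longrightarrow> vsqnorm N (psi l) \<noteq> 0" and finL: "finite L"
    and b: "bij_betw (\<lambda>(i,r). phi i r) (I \<times> {..<M}) {..<N}" and finI: "finite I"
    and v: "vsqnorm M v = 1"
  shows "(\<Sum>l\<in>L. (\<Sum>i\<in>I. (cmod (vinner M (\<lambda>r. psi l (phi i r)) v))\<^sup>2) / vsqnorm N (psi l)) \<le> real (card I)"
proof -
  define y where "y l s = psi l (case s of (i,r) \<Rightarrow> phi i r)" for l s
  define x where "x l r = y l r / of_real (sqrt (sqnorm_on (I \<times> {..<M}) (y l)))" for l r
  have py: "sqnorm_on (I \<times> {..<M}) (y l) = vsqnorm N (psi l)" for l
    unfolding y_def by (rule sqnorm_on_reindex[OF b])
  have ox: "orthonormal_on (I \<times> {..<M}) L x"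
    unfolding x_def using orth nz py inner_on_reindex[OF b] unfolding y_def
    by (intro orthonormal_on_normalize) auto
  have "(\<Sum>l\<in>L. (cmod (vinner M v (\<lambda>r. x l (i,r))))\<^sup>2) \<le> 1" if "i \<in> I" for i
    using bessel_inequality_slice[OF ox finL finI that, of v] v by simp
  moreover have "(cmod (vinner M v (\<lambda>r. x l (i,r))))\<^sup>2 = (cmod (vinner M (\<lambda>r. psi l (phi i r)) v))\<^sup>2 / vsqnorm N (psi l)"
    if "l \<in> L" for l i
    using py[of l] sqnorm_on_nonneg[of "{..<N}" "psi l"]
    unfolding x_def y_def inner_on_divide[of _ _ 1, simplified]
    by (simp add: norm_divide power_divide cnj_inner_on[symmetric, of _ v])
  ultimately have "(\<Sum>i\<in>I. \<Sum>l\<in>L. (cmod (vinner M (\<lambda>r. psi l (phi i r)) v))\<^sup>2 / vsqnorm N (psi l)) \<le> (\<Sum>i\<in>I. 1)"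
    by (intro sum_mono) simp
  thus ?thesis unfolding sum_divide_distrib by (subst sum.swap) simp
qed

lemma entropy_partial_trace_ge_nonzero:
  assumes e: "ensemble_decomp N L psi S"
    and orth: "\<And>l l'. l \<in> L \<Longrightarrow> l' \<in> L \<Longrightarrow> l \<noteq> l' \<Longrightarrow> vinner N (psi l) (psi l') = 0"
    and nz: "\<And>l. l \<in> L \<Longrightarrow> vsqnorm N (psi l) \<noteq> 0"
    and b: "bij_betw (\<lambda>(i,r). phi i r) (I \<times> {..<M}) {..<N}" and finI: "finite I" and Ine: "I \<noteq> {}"
    and R: "R \<in> carrier_mat M M"
    and Rd: "\<And>r s. r < M \<Longrightarrow> s < M \<Longrightarrow> R $$ (r,s) = (\<Sum>i\<in>I. S $$ (phi i r, phi i s))"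
  shows "(\<Sum>l\<in>L. eta (vsqnorm N (psi l))) - ln (real (card I)) * (\<Sum>l\<in>L. vsqnorm N (psi l)) \<le> entropy R"
proof -
  have finL: "finite L" using e unfolding ensemble_decomp_def by simp
  obtain g nu where o: "onb M g" and ent: "entropy R = (\<Sum>k<M. eta (nu k))"
    and nu: "\<And>k. k < M \<Longrightarrow> nu k = (\<Sum>x\<in>L \<times> I. (cmod (vinner M ((\<lambda>(l,i) r. psi l (phi i r)) x) (g k)))\<^sup>2)"
    using ensemble_decomp_spectral[OF ensemble_decomp_partial_trace[OF e b finI R Rd]] by blast
  define p where "p l = vsqnorm N (psi l)" for l
  define Sm where "Sm l k = (\<Sum>i\<in>I. (cmod (vinner M (\<lambda>r. psi l (phi i r)) (g k)))\<^sup>2) / p l" for l k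
  have p0: "p l > 0" if "l \<in> L" for l using nz[OF that] sqnorm_on_nonneg unfolding p_def by (simp add: less_le)
  have rows: "(\<Sum>k\<in>{..<M}. Sm l k) = 1" if l: "l \<in> L" for l
  proof -
    have "(\<Sum>k\<in>{..<M}. Sm l k) = (\<Sum>i\<in>I. vsqnorm M (\<lambda>r. psi l (phi i r))) / p l"
      unfolding Sm_def sum_divide_distrib[symmetric] parseval_onb[OF o, symmetric] by (subst sum.swap) simp
    also have "(\<Sum>i\<in>I. vsqnorm M (\<lambda>r. psi l (phi i r))) = p l"
      using sqnorm_on_reindex[OF b, of "psi l"] unfolding p_def sqnorm_on_def sum.cartesian_product'
      by (simp add: case_prod_unfold)
    finally show ?thesis using p0[OF l] by simp
  qed
  have nuS: "nu k = (\<Sum>l\<in>L. Sm l k * p l)" if "k \<in> {..<M}" for k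
    using nu that unfolding Sm_def sum.cartesian_product' by (auto dest: p0 intro!: sum.cong)
  have "(\<Sum>l\<in>L. eta (p l)) - ln (real (card I)) * (\<Sum>k\<in>{..<M}. nu k) \<le> (\<Sum>k\<in>{..<M}. eta (nu k))"
  proof (rule sum_eta_stochastic_image_ge[OF _ finL, where S=Sm])
    show "(\<Sum>l\<in>L. Sm l k) \<le> real (card I)" if "k \<in> {..<M}" for k
      using sum_normalized_overlaps_le_card[OF orth nz finL b finI, where v="g k"] o that
        of_real_sqnorm_on[of "{..<M}" "g k"]
      unfolding Sm_def p_def orthonormal_on_def by simp
  qed (use finI Ine p0 rows nuS in \<open>auto simp: Sm_def card_gt_0_iff sum_nonneg less_imp_le\<close>)
  moreover have "(\<Sum>k\<in>{..<M}. nu k) = (\<Sum>l\<in>L. p l)"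
  proof -
    have "(\<Sum>k\<in>{..<M}. nu k) = (\<Sum>l\<in>L. (\<Sum>k\<in>{..<M}. Sm l k) * p l)"
      using nuS unfolding sum_distrib_right by (subst sum.swap) simp
    thus ?thesis using rows by simp
  qed
  ultimately show ?thesis using ent unfolding p_def by simp
qed


lemma entropy_partial_trace_ge:
  assumes e: "ensemble_decomp N L psi S"
    and orth: "\<And>l l'. l \<in> L \<Longrightarrow> l' \<in> L \<Longrightarrow> l \<noteq> l' \<Longrightarrow> vinner N (psi l) (psi l') = 0"
    and b: "bij_betw (\<lambda>(i,r). phi i r) (I \<times> {..<M}) {..<N}" and finI: "finite I" and Ine: "I \<noteq> {}"
    and R: "R \<in> carrier_mat M M"
    and Rd: "\<And>r s. r < M \<Longrightarrow> s < M \<Longrightarrow> R $$ (r,s) = (\<Sum>i\<in>I. S $$ (phi i r, phi i s))"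
  shows "(\<Sum>l\<in>L. eta (vsqnorm N (psi l))) - ln (real (card I)) * (\<Sum>l\<in>L. vsqnorm N (psi l)) \<le> entropy R"
proof -
  define L' where "L' = {l \<in> L. vsqnorm N (psi l) \<noteq> 0}"
  have finL: "finite L" using e unfolding ensemble_decomp_def by simp
  have "(\<Sum>l\<in>L'. eta (vsqnorm N (psi l))) - ln (real (card I)) * (\<Sum>l\<in>L'. vsqnorm N (psi l)) \<le> entropy R"
    using orth unfolding L'_def
    by (intro entropy_partial_trace_ge_nonzero[OF ensemble_decomp_drop_zeros[OF e] _ _ b finI Ine R Rd]) auto
  moreover have "(\<Sum>l\<in>L. eta (vsqnorm N (psi l))) = (\<Sum>l\<in>L'. eta (vsqnorm N (psi l)))"
    "(\<Sum>l\<in>L. vsqnorm N (psi l)) = (\<Sum>l\<in>L'. vsqnorm N (psi l))"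
    using finL unfolding L'_def by (auto intro: sum.mono_neutral_right)
  ultimately show ?thesis by simp
qed

lemma entropy_ge_orthogonal_ensemble:
  assumes e: "ensemble_decomp N L psi M"
    and orth: "\<And>l l'. l \<in> L \<Longrightarrow> l' \<in> L \<Longrightarrow> l \<noteq> l' \<Longrightarrow> vinner N (psi l) (psi l') = 0"
  shows "(\<Sum>l\<in>L. eta (vsqnorm N (psi l))) \<le> entropy M"
proof -
  have "bij_betw (\<lambda>(i,r). (\<lambda>_ r. r) i r) ({0::nat} \<times> {..<N}) {..<N}"
    by (auto simp: bij_betw_def inj_on_def)
  moreover have "M \<in> carrier_mat N N" using e unfolding ensemble_decomp_def by simp
  ultimately show ?thesis using entropy_partial_trace_ge[OF e orth, of "\<lambda>_ r. r" "{0::nat}"] by simp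
qed

lemma mat_adjoint_entry:
  "A \<in> carrier_mat n n \<Longrightarrow> i < n \<Longrightarrow> j < n \<Longrightarrow> mat_adjoint A $$ (i,j) = cnj (A $$ (j,i))"
  unfolding mat_adjoint_def by (simp add: mat_of_rows_def)

lemma density_hermitian: "density n A \<Longrightarrow> hermitian_on n (\<lambda>r s. A $$ (r,s))"
  unfolding density_def hermitian_on_def by (metis mat_adjoint_entry)

lemma spectral_decomp_eigenvector:
  assumes d: "spectral_decomp N M u lam" and k: "k < N" and r: "r < N"
  shows "(\<Sum>s<N. M r s * u k s) = of_real (lam k) * u k r"
proof -
  have o: "onb N u" using d unfolding spectral_decomp_def by simp
  have "(\<Sum>s<N. M r s * u k s) = (\<Sum>s<N. \<Sum>j<N. of_real (lam j) * u j r * (u k s * cnj (u j s)))"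
    using d r unfolding spectral_decomp_def
    by (intro sum.cong refl) (simp add: sum_distrib_left sum_distrib_right mult_ac)
  also have "\<dots> = (\<Sum>j<N. of_real (lam j) * u j r * vinner N (u k) (u j))"
    unfolding inner_on_def sum_distrib_left by (rule sum.swap)
  also have "\<dots> = (\<Sum>j<N. if j = k then of_real (lam k) * u k r else 0)"
    using o k unfolding orthonormal_on_def by (intro sum.cong refl) auto
  finally show ?thesis using k by simp
qed

lemma density_eigenvalue_nonneg:
  assumes dS: "density N S" and d: "spectral_decomp N (\<lambda>r s. S $$ (r,s)) u lam" and k: "k < N"
  shows "lam k \<ge> 0"
proof -
  have S: "S \<in> carrier_mat N N" using dS unfolding density_def by simp
  define v where "v = vec N (u k)"
  have v: "v \<in> carrier_vec N" unfolding v_def by simp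
  have "(S *\<^sub>v v) \<bullet>c v = (\<Sum>r<N. (\<Sum>s<N. S $$ (r,s) * u k s) * cnj (u k r))"
    using S unfolding v_def by (simp add: scalar_prod_def atLeast0LessThan)
  also have "\<dots> = of_real (lam k) * vinner N (u k) (u k)"
    using spectral_decomp_eigenvector[OF d k] unfolding inner_on_def sum_distrib_left
    by (intro sum.cong refl) (simp add: mult.assoc)
  also have "\<dots> = of_real (lam k)" using d k unfolding spectral_decomp_def orthonormal_on_def by simp
  finally show ?thesis using dS v unfolding density_def by (metis Re_complex_of_real)
qed

lemma density_eigenvalue_sum:
  assumes dS: "density N S" and d: "spectral_decomp N (\<lambda>r s. S $$ (r,s)) u lam"
  shows "(\<Sum>k<N. lam k) = 1"
proof -
  have o: "onb N u" and S: "S \<in> carrier_mat N N"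
    using d dS unfolding spectral_decomp_def density_def by auto
  have "mtrace S = (\<Sum>r<N. \<Sum>k<N. of_real (lam k) * (u k r * cnj (u k r)))"
    unfolding mtrace_def using S d unfolding spectral_decomp_def by (intro sum.cong) (auto simp: mult.assoc)
  also have "\<dots> = (\<Sum>k<N. of_real (lam k) * vinner N (u k) (u k))"
    unfolding inner_on_def sum_distrib_left by (rule sum.swap)
  also have "\<dots> = (\<Sum>k<N. of_real (lam k))" using o unfolding orthonormal_on_def by simp
  finally have "complex_of_real (\<Sum>k<N. lam k) = 1" using dS unfolding density_def by simp
  thus ?thesis by (simp only: of_real_eq_1_iff)
qed

lemma density_orthogonal_ensemble:
  assumes dS: "density N S"
  shows "\<exists>psi. ensemble_decomp N {..<N} psi S \<and>
     (\<forall>l<N. \<forall>l'<N. l \<noteq> l' \<longrightarrow> vinner N (psi l) (psi l') = 0) \<and> (\<Sum>l<N. vsqnorm N (psi l)) = 1"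
proof -
  obtain u lam where d: "spectral_decomp N (\<lambda>r s. S $$ (r,s)) u lam"
    using hermitian_spectral_decomp[OF density_hermitian[OF dS]] by blast
  have o: "onb N u" using d unfolding spectral_decomp_def by simp
  have lam0: "\<And>k. k < N \<Longrightarrow> lam k \<ge> 0" by (rule density_eigenvalue_nonneg[OF dS d])
  define psi where "psi k r = of_real (sqrt (lam k)) * u k r" for k r
  have ipp: "vinner N (psi l) (psi l') = of_real (sqrt (lam l) * sqrt (lam l')) * vinner N (u l) (u l')" for l l'
    unfolding inner_on_def psi_def sum_distrib_left by (intro sum.cong refl) (simp add: mult_ac)
  have "ensemble_decomp N {..<N} psi S" unfolding ensemble_decomp_def
  proof (intro conjI allI impI)
    fix r s assume "r < N" "s < N"
    moreover have "of_real (lam k) = of_real (sqrt (lam k)) * (of_real (sqrt (lam k)) :: complex)" if "k < N" for k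
      using lam0[OF that] by (simp flip: of_real_mult)
    ultimately show "S $$ (r,s) = (\<Sum>l\<in>{..<N}. psi l r * cnj (psi l s))"
      using d unfolding spectral_decomp_def psi_def by (auto simp: mult_ac intro: sum.cong)
  qed (use dS in \<open>auto simp: density_def\<close>)
  moreover have "vsqnorm N (psi l) = lam l" if "l < N" for l
  proof -
    have "complex_of_real (vsqnorm N (psi l)) = of_real (lam l)"
      unfolding of_real_sqnorm_on ipp using o that lam0[OF that] unfolding orthonormal_on_def by simp
    thus ?thesis by (simp only: of_real_eq_iff)
  qed
  moreover have "\<forall>l<N. \<forall>l'<N. l \<noteq> l' \<longrightarrow> vinner N (psi l) (psi l') = 0"
    using o unfolding ipp orthonormal_on_def by simp
  ultimately show ?thesis using density_eigenvalue_sum[OF dS d] by auto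
qed

section \<open>The tripartite index layout\<close>

lemma index_pair_less: "x < m \<Longrightarrow> y < n \<Longrightarrow> x * n + y < m * (n::nat)"
proof -
  assume "x < m" "y < n"
  hence "x * n + y < Suc x * n" by simp
  also have "\<dots> \<le> m * n" using \<open>x < m\<close> by (intro mult_le_mono1) simp
  finally show ?thesis .
qed

lemma bij_betw_index_pair: "bij_betw (\<lambda>(x,y). x * n + y) ({..<m} \<times> {..<n}) {..<m * (n::nat)}"
proof (rule bij_betw_byWitness[where f'="\<lambda>t. (t div n, t mod n)"])
  show "(\<lambda>t. (t div n, t mod n)) ` {..<m * n} \<subseteq> {..<m} \<times> {..<n}"
    by (auto simp: less_mult_imp_div_less intro!: mod_less_divisor gr0I)
qed (auto simp: index_pair_less)

lemma bij_betw_idx3: "bij_betw (\<lambda>((i,j),k). idx3 b c i j k) (({..<a} \<times> {..<b}) \<times> {..<c}) {..<a*b*c}"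
proof -
  have "bij_betw (map_prod (\<lambda>(x,y). x * b + y) id) (({..<a} \<times> {..<b}) \<times> {..<c}) ({..<a*b} \<times> {..<c})"
    by (intro bij_betw_map_prod bij_betw_index_pair bij_betw_id)
  from bij_betw_trans[OF this bij_betw_index_pair] show ?thesis by (rule bij_betw_cong[THEN iffD1, rotated]) (auto simp: idx3_def)
qed

lemma bij_betw_idx3_BC: "bij_betw (\<lambda>(i,r). idx3 b c i (r div c) (r mod c)) ({..<a} \<times> {..<b*c}) {..<a*b*c}"
proof -
  have "idx3 b c i (r div c) (r mod c) = i * (b*c) + r" for i r
    unfolding idx3_def by (simp add: algebra_simps)
  thus ?thesis using bij_betw_index_pair[of "b*c" a] by (simp add: mult.assoc)
qed

lemma bij_betw_idx3_AC: "bij_betw (\<lambda>(j,r). idx3 b c (r div c) j (r mod c)) ({..<b} \<times> {..<a*c}) {..<a*b*c}"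
proof -
  have "bij_betw (\<lambda>(j,r). ((r div c, j), r mod c)) ({..<b} \<times> {..<a*c}) (({..<a} \<times> {..<b}) \<times> {..<c})"
  proof (rule bij_betw_byWitness[where f'="\<lambda>((i,j),k). (j, i * c + k)"])
    show "(\<lambda>(j,r). ((r div c, j), r mod c)) ` ({..<b} \<times> {..<a*c}) \<subseteq> ({..<a} \<times> {..<b}) \<times> {..<c}"
      by (auto simp: less_mult_imp_div_less intro!: mod_less_divisor gr0I)
  qed (auto simp: index_pair_less)
  from bij_betw_trans[OF this bij_betw_idx3] show ?thesis by (simp add: comp_def case_prod_unfold)
qed

section \<open>A lower bound on conditional mutual information\<close>

text \<open>Strong subadditivity would give 0; this crude bound only makes the infimum in
  squashed_ent well defined.\<close>

lemma cmi_ge: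
  assumes a: "a > 0" and b: "b > 0" and d: "density (a*b*c) S"
  shows "cmi a b c S \<ge> - 2 * ln (real (a*b))"
proof -
  define N where "N = a*b*c"
  obtain psi where e: "ensemble_decomp N {..<N} psi S"
    and orth: "\<forall>l<N. \<forall>l'<N. l \<noteq> l' \<longrightarrow> vinner N (psi l) (psi l') = 0"
    and tr: "(\<Sum>l<N. vsqnorm N (psi l)) = 1"
    using density_orthogonal_ensemble[OF d[folded N_def]] by blast
  define E where "E = (\<Sum>l<N. eta (vsqnorm N (psi l)))"
  have HABC: "entropy S \<le> E" unfolding E_def using entropy_le_ensemble[OF e] by simp
  have HAC: "E - ln (real b) \<le> entropy (red_AC a b c S)"
    using entropy_partial_trace_ge[OF e _ bij_betw_idx3_AC[of b c a, folded N_def], where R="red_AC a b c S"]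
      orth tr b by (simp add: E_def red_AC_def lessThan_empty_iff)
  have HBC: "E - ln (real a) \<le> entropy (red_BC a b c S)"
    using entropy_partial_trace_ge[OF e _ bij_betw_idx3_BC[of b c a, folded N_def], where R="red_BC a b c S"]
      orth tr a by (simp add: E_def red_BC_def lessThan_empty_iff)
  have HC: "entropy (red_C a b c S) \<le> E + ln (real (a*b))"
  proof -
    define I where "I = {..<a} \<times> {..<b}"
    define phi where "phi ij r = (case ij of (i,j) \<Rightarrow> idx3 b c i j r)" for ij r
    have bij: "bij_betw (\<lambda>(ij,r). phi ij r) (I \<times> {..<c}) {..<N}"
      using bij_betw_idx3[of b c a] unfolding N_def I_def phi_def by (simp add: case_prod_unfold)
    have finI: "finite I" and Ine: "I \<noteq> {}" and cI: "card I = a*b"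
      unfolding I_def using a b by (auto simp: card_cartesian_product)
    have eC: "ensemble_decomp c ({..<N} \<times> I) (\<lambda>(l,ij) r. psi l (phi ij r)) (red_C a b c S)"
      by (rule ensemble_decomp_partial_trace[OF e bij finI])
         (auto simp: red_C_def I_def phi_def sum.cartesian_product')
    have "entropy (red_C a b c S) \<le> (\<Sum>l<N. \<Sum>ij\<in>I. eta (vsqnorm c (\<lambda>r. psi l (phi ij r))))"
      using entropy_le_ensemble[OF eC] unfolding sum.cartesian_product' by simp
    also have "\<dots> \<le> (\<Sum>l<N. eta (vsqnorm N (psi l)) + vsqnorm N (psi l) * ln (real (card I)))"
    proof (rule sum_mono)
      fix l assume "l \<in> {..<N}"
      have "(\<Sum>ij\<in>I. vsqnorm c (\<lambda>r. psi l (phi ij r))) = vsqnorm N (psi l)"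
        using sqnorm_on_reindex[OF bij, of "psi l"] unfolding sqnorm_on_def sum.cartesian_product'
        by (simp add: case_prod_unfold)
      thus "(\<Sum>ij\<in>I. eta (vsqnorm c (\<lambda>r. psi l (phi ij r))))
              \<le> eta (vsqnorm N (psi l)) + vsqnorm N (psi l) * ln (real (card I))"
        using sum_eta_le_eta_sum[OF finI Ine, of "\<lambda>ij. vsqnorm c (\<lambda>r. psi l (phi ij r))"]
        by (simp add: sqnorm_on_nonneg)
    qed
    also have "\<dots> = E + ln (real (a*b))"
      unfolding E_def sum.distrib sum_distrib_right[symmetric] tr cI by simp
    finally show ?thesis .
  qed
  have "ln (real (a*b)) = ln (real a) + ln (real b)" using a b by (simp add: ln_mult)
  thus ?thesis unfolding cmi_def using HABC HAC HBC HC by linarith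
qed

section \<open>The witness state and its extensions\<close>

definition diag_cmat :: "nat \<Rightarrow> (nat \<Rightarrow> real) \<Rightarrow> complex mat" where
  "diag_cmat n d = mat n n (\<lambda>(r,s). if r = s then complex_of_real (d r) else 0)"

lemma entropy_diag_cmat: "entropy (diag_cmat n d) = (\<Sum>k<n. eta (d k))"
proof (rule entropy_spectral_decomp)
  show "diag_cmat n d \<in> carrier_mat n n" unfolding diag_cmat_def by simp
  show "spectral_decomp n (\<lambda>r s. diag_cmat n d $$ (r,s)) (\<lambda>k r. if k = r then 1 else 0) d"
    unfolding spectral_decomp_def orthonormal_on_def inner_on_def diag_cmat_def
    by (auto simp: if_distrib sum.delta cong: if_cong)
qed

lemma density_diag_cmat:
  assumes d0: "\<And>k. k < n \<Longrightarrow> d k \<ge> 0" and ds: "(\<Sum>k<n. d k) = 1"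
  shows "density n (diag_cmat n d)"
  unfolding density_def
proof (intro conjI ballI)
  show D: "diag_cmat n d \<in> carrier_mat n n" unfolding diag_cmat_def by simp
  show "mat_adjoint (diag_cmat n d) = diag_cmat n d"
  proof (rule eq_matI)
    fix i j assume "i < dim_row (diag_cmat n d)" "j < dim_col (diag_cmat n d)"
    hence "i < n" "j < n" unfolding diag_cmat_def by auto
    thus "mat_adjoint (diag_cmat n d) $$ (i,j) = diag_cmat n d $$ (i,j)"
      using mat_adjoint_entry[OF D] unfolding diag_cmat_def by auto
  qed (auto simp: mat_adjoint_def diag_cmat_def mat_of_rows_def)
  fix v :: "complex vec" assume v: "v \<in> carrier_vec n"
  have Dv: "(diag_cmat n d *\<^sub>v v) $ r = of_real (d r) * v $ r" if r: "r < n" for r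
  proof -
    have "(diag_cmat n d *\<^sub>v v) $ r = (\<Sum>s<n. (if r = s then complex_of_real (d r) else 0) * v $ s)"
      using r v unfolding diag_cmat_def by (simp add: scalar_prod_def atLeast0LessThan)
    also have "\<dots> = (\<Sum>s<n. if s = r then complex_of_real (d r) * v $ r else 0)"
      by (intro sum.cong refl) auto
    finally show ?thesis using r by simp
  qed
  have "(diag_cmat n d *\<^sub>v v) \<bullet>c v = (\<Sum>r<n. of_real (d r) * (v $ r * cnj (v $ r)))"
    using v Dv unfolding diag_cmat_def by (simp add: scalar_prod_def atLeast0LessThan mult.assoc)
  also have "\<dots> = of_real (\<Sum>r<n. d r * (cmod (v $ r))\<^sup>2)"
    unfolding of_real_sum by (intro sum.cong refl) (simp only: of_real_mult of_real_cmod_sq)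
  finally have "Re ((diag_cmat n d *\<^sub>v v) \<bullet>c v) = (\<Sum>r<n. d r * (cmod (v $ r))\<^sup>2)" by simp
  also have "\<dots> \<ge> 0" using d0 by (intro sum_nonneg) simp
  finally show "0 \<le> Re ((diag_cmat n d *\<^sub>v v) \<bullet>c v)" .
next
  have "mtrace (diag_cmat n d) = (\<Sum>r<n. complex_of_real (d r))"
    unfolding mtrace_def diag_cmat_def by simp
  also have "\<dots> = 1" unfolding of_real_sum[symmetric] ds by simp
  finally show "mtrace (diag_cmat n d) = 1" .
qed

text \<open>In the basis |i j> = index i*2+j, classical_corr is (|00><00| + |11><11|)/2 and copy_ext is
  (|000><000| + |111><111|)/2, the extension that copies the classical bit into C.\<close>

definition classical_corr :: "complex mat" where
  "classical_corr = diag_cmat 4 (\<lambda>k. if k = 0 \<or> k = 3 then 1/2 else 0)"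

definition copy_ext :: "complex mat" where
  "copy_ext = diag_cmat 8 (\<lambda>k. if k = 0 \<or> k = 7 then 1/2 else 0)"

lemma less_4_cases: "(r::nat) < 4 \<Longrightarrow> r = 0 \<or> r = 1 \<or> r = 2 \<or> r = 3"
  by auto

lemma classical_corr_density: "density (2*2) classical_corr"
  unfolding classical_corr_def by (simp, rule density_diag_cmat) (auto simp: lessThan_nat_numeral)

lemma copy_ext_density: "density (2*2*2) copy_ext"
  unfolding copy_ext_def by (simp, rule density_diag_cmat) (auto simp: lessThan_nat_numeral)

lemma copy_ext_red_AB: "red_AB 2 2 2 copy_ext = classical_corr"
proof (rule eq_matI)
  fix r s assume "r < dim_row classical_corr" "s < dim_col classical_corr"
  hence r: "r < 4" and s: "s < 4" unfolding classical_corr_def diag_cmat_def by auto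
  show "red_AB 2 2 2 copy_ext $$ (r,s) = classical_corr $$ (r,s)"
    using less_4_cases[OF r] less_4_cases[OF s] unfolding red_AB_def classical_corr_def copy_ext_def diag_cmat_def idx3_def
    by (auto simp: lessThan_nat_numeral)
qed (auto simp: red_AB_def classical_corr_def diag_cmat_def)

lemma copy_ext_red_AC: "red_AC 2 2 2 copy_ext = classical_corr"
proof (rule eq_matI)
  fix r s assume "r < dim_row classical_corr" "s < dim_col classical_corr"
  hence r: "r < 4" and s: "s < 4" unfolding classical_corr_def diag_cmat_def by auto
  show "red_AC 2 2 2 copy_ext $$ (r,s) = classical_corr $$ (r,s)"
    using less_4_cases[OF r] less_4_cases[OF s] unfolding red_AC_def classical_corr_def copy_ext_def diag_cmat_def idx3_def
    by (auto simp: lessThan_nat_numeral)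
qed (auto simp: red_AC_def classical_corr_def diag_cmat_def)

lemma copy_ext_red_BC: "red_BC 2 2 2 copy_ext = classical_corr"
proof (rule eq_matI)
  fix r s assume "r < dim_row classical_corr" "s < dim_col classical_corr"
  hence r: "r < 4" and s: "s < 4" unfolding classical_corr_def diag_cmat_def by auto
  show "red_BC 2 2 2 copy_ext $$ (r,s) = classical_corr $$ (r,s)"
    using less_4_cases[OF r] less_4_cases[OF s] unfolding red_BC_def classical_corr_def copy_ext_def diag_cmat_def idx3_def
    by (auto simp: lessThan_nat_numeral)
qed (auto simp: red_BC_def classical_corr_def diag_cmat_def)

lemma copy_ext_red_C: "red_C 2 2 2 copy_ext = diag_cmat 2 (\<lambda>k. 1/2)"
proof (rule eq_matI)
  fix r s assume "r < dim_row (diag_cmat 2 (\<lambda>k. 1/2))" "s < dim_col (diag_cmat 2 (\<lambda>k. 1/2))"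
  hence "r = 0 \<or> r = 1" "s = 0 \<or> s = 1" unfolding diag_cmat_def by auto
  thus "red_C 2 2 2 copy_ext $$ (r,s) = diag_cmat 2 (\<lambda>k. 1/2) $$ (r,s)"
    unfolding red_C_def copy_ext_def diag_cmat_def idx3_def by (auto simp: lessThan_nat_numeral)
qed (auto simp: red_C_def diag_cmat_def)

lemma cmi_copy_ext: "cmi 2 2 2 copy_ext = 0"
proof -
  have "entropy classical_corr = ln 2" "entropy (diag_cmat 2 (\<lambda>k. 1/2)) = ln 2" "entropy copy_ext = ln 2"
    unfolding classical_corr_def copy_ext_def entropy_diag_cmat by (simp_all add: lessThan_nat_numeral eta_half)
  thus ?thesis unfolding cmi_def copy_ext_red_AC copy_ext_red_BC copy_ext_red_C by simp
qed

lemma vinner_split: "vinner (m * n) x y = (\<Sum>i<m. \<Sum>k<n. x (i * n + k) * cnj (y (i * n + k)))"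
  using inner_on_reindex[OF bij_betw_index_pair[of n m], of x y]
  unfolding inner_on_def sum.cartesian_product' by simp

lemma pure_state_ensemble:
  assumes "pure_state N S"
  shows "\<exists>f. ensemble_decomp N {..<1::nat} (\<lambda>_. f) S \<and> vsqnorm N f = 1"
proof -
  obtain psi where "psi \<in> carrier_vec N" and S: "S = mat N N (\<lambda>(i,j). psi $ i * cnj (psi $ j))"
    using assms unfolding pure_state_def by blast
  have "mtrace S = 1" using assms unfolding pure_state_def density_def by simp
  hence "complex_of_real (vsqnorm N (\<lambda>r. psi $ r)) = 1"
    unfolding of_real_sqnorm_on inner_on_def mtrace_def S by simp
  moreover have "ensemble_decomp N {..<1::nat} (\<lambda>_ r. psi $ r) S"
    unfolding ensemble_decomp_def S by simp
  ultimately show ?thesis by (metis of_real_eq_1_iff)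
qed

lemma entropy_ge_ln2_of_orthogonal_halves:
  assumes e: "ensemble_decomp M ({..<1::nat} \<times> {..<2::nat}) (\<lambda>(l,i). g i) R"
    and g: "\<And>i i'. i < 2 \<Longrightarrow> i' < 2 \<Longrightarrow> vinner M (g i) (g i') = (if i = i' then 1/2 else 0)"
  shows "ln 2 \<le> entropy R"
proof -
  have norm: "vsqnorm M (g i) = 1/2" if "i < 2" for i
  proof -
    have "complex_of_real (vsqnorm M (g i)) = complex_of_real (1/2)"
      using g[OF that that] unfolding of_real_sqnorm_on by simp
    thus ?thesis by (simp only: of_real_eq_iff)
  qed
  have "(\<Sum>x\<in>{..<1::nat} \<times> {..<2::nat}. eta (vsqnorm M ((\<lambda>(l,i). g i) x))) \<le> entropy R"
    using g by (intro entropy_ge_orthogonal_ensemble[OF e]) (auto split: if_splits)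
  thus ?thesis unfolding sum.cartesian_product' by (simp add: lessThan_nat_numeral eta_half norm)
qed

context
  fixes c :: nat and f :: "nat \<Rightarrow> complex" and S :: "complex mat"
  assumes ens: "ensemble_decomp (2*2*c) {..<1::nat} (\<lambda>_. f) S"
    and marg: "red_AB 2 2 c S = classical_corr"
begin

lemma pure_extension_slice_gram:
  assumes "i < 2" "j < 2" "i' < 2" "j' < 2"
  shows "(\<Sum>k<c. f (idx3 2 c i j k) * cnj (f (idx3 2 c i' j' k))) = (if i = j \<and> i' = j' \<and> i = i' then 1/2 else 0)"
proof -
  have "idx3 2 c i j k < 2*2*c" "idx3 2 c i' j' k < 2*2*c" if "k < c" for k
    using assms that unfolding idx3_def by (simp_all add: index_pair_less)
  hence "(\<Sum>k<c. f (idx3 2 c i j k) * cnj (f (idx3 2 c i' j' k))) = red_AB 2 2 c S $$ (i*2+j, i'*2+j')"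
    using ens assms unfolding ensemble_decomp_def red_AB_def by simp
  also have "\<dots> = (if i = j \<and> i' = j' \<and> i = i' then 1/2 else 0)"
    using less_2_cases[OF assms(1)] less_2_cases[OF assms(2)] less_2_cases[OF assms(3)] less_2_cases[OF assms(4)]
    unfolding marg classical_corr_def diag_cmat_def by auto
  finally show ?thesis .
qed

lemma pure_extension_entropy_C_le: "entropy (red_C 2 2 c S) \<le> ln 2"
proof -
  define I where "I = {..<2::nat} \<times> {..<2::nat}"
  define phi where "phi ij r = (case ij of (i,j) \<Rightarrow> idx3 2 c i j r)" for ij r
  have bij: "bij_betw (\<lambda>(ij,r). phi ij r) (I \<times> {..<c}) {..<2*2*c}"
    using bij_betw_idx3[of 2 c 2] unfolding I_def phi_def by (simp add: case_prod_unfold)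
  have "ensemble_decomp c ({..<1::nat} \<times> I) (\<lambda>(l,ij) r. f (phi ij r)) (red_C 2 2 c S)"
    by (rule ensemble_decomp_partial_trace[OF ens bij])
       (auto simp: red_C_def I_def phi_def sum.cartesian_product')
  from entropy_le_ensemble[OF this]
  have "entropy (red_C 2 2 c S) \<le> (\<Sum>i<2. \<Sum>j<2. eta (vsqnorm c (\<lambda>k. f (idx3 2 c i j k))))"
    unfolding sum.cartesian_product' I_def phi_def by simp
  moreover have "vsqnorm c (\<lambda>k. f (idx3 2 c i j k)) = (if i = j then 1/2 else 0)" if "i < 2" "j < 2" for i j
  proof -
    have "complex_of_real (vsqnorm c (\<lambda>k. f (idx3 2 c i j k))) = complex_of_real (if i = j then 1/2 else 0)"
      using pure_extension_slice_gram[OF that that] unfolding of_real_sqnorm_on inner_on_def by simp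
    thus ?thesis by (simp only: of_real_eq_iff)
  qed
  ultimately show ?thesis by (simp add: lessThan_nat_numeral eta_half)
qed

lemma pure_extension_entropy_AC_ge: "ln 2 \<le> entropy (red_AC 2 2 c S)"
proof (rule entropy_ge_ln2_of_orthogonal_halves)
  define phi where "phi j r = idx3 2 c (r div c) j (r mod c)" for j r
  show "ensemble_decomp (2*c) ({..<1::nat} \<times> {..<2::nat}) (\<lambda>(l,j) r. f (phi j r)) (red_AC 2 2 c S)"
    by (rule ensemble_decomp_partial_trace[OF ens bij_betw_idx3_AC[of 2 c 2, folded phi_def]])
       (auto simp: red_AC_def phi_def)
  fix j j' :: nat assume "j < 2" "j' < 2"
  thus "vinner (2*c) (\<lambda>r. f (phi j r)) (\<lambda>r. f (phi j' r)) = (if j = j' then 1/2 else 0)"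
    unfolding vinner_split phi_def using pure_extension_slice_gram
    by (simp add: lessThan_nat_numeral)
qed

lemma pure_extension_entropy_BC_ge: "ln 2 \<le> entropy (red_BC 2 2 c S)"
proof (rule entropy_ge_ln2_of_orthogonal_halves)
  define phi where "phi i r = idx3 2 c i (r div c) (r mod c)" for i r
  show "ensemble_decomp (2*c) ({..<1::nat} \<times> {..<2::nat}) (\<lambda>(l,i) r. f (phi i r)) (red_BC 2 2 c S)"
    by (rule ensemble_decomp_partial_trace[OF ens bij_betw_idx3_BC[of 2 c 2, folded phi_def]])
       (auto simp: red_BC_def phi_def)
  fix i i' :: nat assume "i < 2" "i' < 2"
  thus "vinner (2*c) (\<lambda>r. f (phi i r)) (\<lambda>r. f (phi i' r)) = (if i = i' then 1/2 else 0)"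
    unfolding vinner_split phi_def using pure_extension_slice_gram
    by (simp add: lessThan_nat_numeral)
qed

end

lemma cmi_pure_extension_ge:
  assumes p: "pure_state (2*2*c) S" and marg: "red_AB 2 2 c S = classical_corr"
  shows "ln 2 \<le> cmi 2 2 c S"
proof -
  obtain f where ens: "ensemble_decomp (2*2*c) {..<1::nat} (\<lambda>_. f) S" and f1: "vsqnorm (2*2*c) f = 1"
    using pure_state_ensemble[OF p] by blast
  have "entropy S \<le> 0" using entropy_le_ensemble[OF ens] f1 by (simp add: eta_def)
  thus ?thesis unfolding cmi_def
    using pure_extension_entropy_C_le[OF ens marg] pure_extension_entropy_AC_ge[OF ens marg]
      pure_extension_entropy_BC_ge[OF ens marg] by linarith
qed

lemma pure_state_outer:
  assumes v: "v \<in> carrier_vec n" and v1: "(\<Sum>i<n. v $ i * cnj (v $ i)) = 1"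
  shows "pure_state n (mat n n (\<lambda>(i,j). v $ i * cnj (v $ j)))"
    (is "pure_state n ?P")
  unfolding pure_state_def density_def
proof (intro conjI ballI bexI[OF _ v] refl)
  show P: "?P \<in> carrier_mat n n" by simp
  show "mat_adjoint ?P = ?P"
    by (rule eq_matI) (auto simp: mat_adjoint_entry[OF P] mat_adjoint_def mat_of_rows_def)
  show "mtrace ?P = 1" using v1 unfolding mtrace_def by simp
  fix x :: "complex vec" assume x: "x \<in> carrier_vec n"
  define w where "w = (\<Sum>s<n. cnj (v $ s) * x $ s)"
  have "(?P *\<^sub>v x) $ r = v $ r * w" if "r < n" for r
    using that x unfolding w_def by (simp add: scalar_prod_def atLeast0LessThan sum_distrib_left mult_ac)
  hence "(?P *\<^sub>v x) \<bullet>c x = (\<Sum>r<n. v $ r * w * cnj (x $ r))"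
    using x by (simp add: scalar_prod_def atLeast0LessThan)
  also have "\<dots> = w * cnj w" unfolding w_def cnj_sum sum_distrib_left sum_distrib_right
    by (intro sum.cong refl) (simp add: mult_ac)
  finally show "0 \<le> Re ((?P *\<^sub>v x) \<bullet>c x)" by (simp add: complex_mult_cnj)
qed

definition ghz_vec :: "complex vec" where
  "ghz_vec = vec 8 (\<lambda>i. if i = 0 \<or> i = 7 then complex_of_real (sqrt (1/2)) else 0)"

definition ghz_state :: "complex mat" where
  "ghz_state = mat 8 8 (\<lambda>(i,j). ghz_vec $ i * cnj (ghz_vec $ j))"

lemma of_real_sqrt_half_sq: "complex_of_real (sqrt (1/2)) * complex_of_real (sqrt (1/2)) = 1/2"
  by (simp only: of_real_mult[symmetric] real_sqrt_mult_self) simp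

lemma ghz_state_pure: "pure_state (2*2*2) ghz_state"
  unfolding ghz_state_def
  by (simp, rule pure_state_outer) (auto simp: ghz_vec_def lessThan_nat_numeral of_real_sqrt_half_sq)

lemma ghz_state_red_AB: "red_AB 2 2 2 ghz_state = classical_corr"
proof (rule eq_matI)
  fix r s assume "r < dim_row classical_corr" "s < dim_col classical_corr"
  hence r: "r < 4" and s: "s < 4" unfolding classical_corr_def diag_cmat_def by auto
  show "red_AB 2 2 2 ghz_state $$ (r,s) = classical_corr $$ (r,s)"
    using less_4_cases[OF r] less_4_cases[OF s]
    unfolding red_AB_def classical_corr_def diag_cmat_def ghz_state_def ghz_vec_def idx3_def
    by (auto simp: lessThan_nat_numeral of_real_sqrt_half_sq)
qed (auto simp: red_AB_def classical_corr_def diag_cmat_def)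

lemma squashed_ent_le_cmi:
  assumes "a > 0" "b > 0" "c > 0" "density (a*b*c) \<sigma>" "red_AB a b c \<sigma> = \<rho>"
  shows "squashed_ent a b \<rho> \<le> cmi a b c \<sigma>"
  unfolding squashed_ent_def
proof (rule cInf_lower)
  show "cmi a b c \<sigma> \<in> {cmi a b c \<sigma> | c \<sigma>. c > 0 \<and> density (a*b*c) \<sigma> \<and> red_AB a b c \<sigma> = \<rho>}"
    using assms by blast
  show "bdd_below {cmi a b c \<sigma> | c \<sigma>. c > 0 \<and> density (a*b*c) \<sigma> \<and> red_AB a b c \<sigma> = \<rho>}"
    using cmi_ge[OF assms(1,2)] by (intro bdd_belowI[of _ "- 2 * ln (real (a*b))"]) blast
qed

lemma le_squashed_ent_pure:
  assumes "c > 0" "pure_state (a*b*c) \<sigma>" "red_AB a b c \<sigma> = \<rho>"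
    and "\<And>c \<sigma>. c > 0 \<Longrightarrow> pure_state (a*b*c) \<sigma> \<Longrightarrow> red_AB a b c \<sigma> = \<rho> \<Longrightarrow> L \<le> cmi a b c \<sigma>"
  shows "L \<le> squashed_ent_pure a b \<rho>"
  unfolding squashed_ent_pure_def using assms by (intro cInf_greatest) blast+

theorem corollary3:
  shows "\<exists>a b (\<rho> :: complex mat). density (a*b) \<rho> \<and> squashed_ent a b \<rho> < squashed_ent_pure a b \<rho>"
proof (intro exI conjI)
  show "density (2*2) classical_corr" by (rule classical_corr_density)
  have "squashed_ent 2 2 classical_corr \<le> 0"
    using squashed_ent_le_cmi[OF _ _ _ copy_ext_density copy_ext_red_AB] cmi_copy_ext by simp
  moreover have "ln 2 \<le> squashed_ent_pure 2 2 classical_corr"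
    using le_squashed_ent_pure[OF _ ghz_state_pure ghz_state_red_AB] cmi_pure_extension_ge by simp
  ultimately show "squashed_ent 2 2 classical_corr < squashed_ent_pure 2 2 classical_corr"
    using ln_gt_zero[of 2] by linarith
qed

end
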